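(* Let $\mathbb{F}$ be an archimedean partially ordered field. Then $\mathbb{F}$ is localizable and the extended Gelfand transformation $\widehat{\cdot}\colon\mathbb{F}\to\mathscr{C}_{\mathrm{a.e.}}(\mathcal{K}(\mathbb{F}))$ is a positive ring morphism and an order embedding.
   Context: All rings are commutative with unit $1$; ring morphisms are unital. A partially ordered commutative ring is a commutative ring $R$ with a partial order $\le$ such that $r\le s$ implies $r+t\le s+t$, and whose positive cone $R^+=\{r:0\le r\}$ is closed under multiplication and contains all squares. A partially ordered field is a partially ordered commutative ring in which every nonzero element is invertible. A ring morphism $\Phi$ is positive if $\Phi(R^+)\subseteq S^+$, an order embedding if it is positive and $\Phi^{-1}(S^+)\subseteq R^+$. $\mathbb{N}=\{1,2,\dots\}$, $\mathbb{N}_0=\mathbb{N}\cup\{0\}$. $R$ is archimedean if $kg+h\in R^+$ for all $k\in\mathbb{N}$ implies $g\in R^+$. $\mathrm{Loc}(R)$ is the set of $s\in1+R^+$ such that $rs\in R^+$ implies $r\in R^+$ for all $r\in R$; $R$ is localizable if every $r$ satisfies $-s\le r\le s$ for some $s\in\mathrm{Loc}(R)$. For a topological space $X$: $\mathscr{C}_{\mathrm{a.e.}}(X)$ is the set of continuous real functions defined on dense open subsets of $X$ modulo $f\approx g$ iff $f,g$ agree on some dense open subset of $\operatorname{dom}f\cap\operatorname{dom}g$, with operations pointwise on the intersection of domains, and order $[f]\le[g]$ iff $f\le g$ pointwise on some dense open subset of $\operatorname{dom}f\cap\operatorname{dom}g$. $R_{\mathrm{loc}}$: fractions $r/s$ ($r\in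 R$, $s\in\mathrm{Loc}(R)$), $r/s=r'/s'$ iff $rs'=r's$, usual operations, $p/q\le r/s$ iff $ps\le rq$. $R^{\mathrm{bd}}_{\mathrm{loc}}=\{a\in R_{\mathrm{loc}}:\exists n\in\mathbb{N}_0,\ -n\le a\le n\}$. $\mathcal{K}(R)$: the ring morphisms $\varphi\colon R^{\mathrm{bd}}_{\mathrm{loc}}\to\mathbb{R}$ with $\varphi(a)\ge0$ for $a\ge0$, with the weak-$*$ topology. $\mathrm{O}_{s<\infty}=\{\varphi\in\mathcal{K}(R):\varphi(1/s)>0\}$ for $s\in\mathrm{Loc}(R)$; for archimedean localizable $R$ these are dense open subsets of $\mathcal{K}(R)$. The extended Gelfand transformation sends $r\in R$ to the class $\widehat r\in\mathscr{C}_{\mathrm{a.e.}}(\mathcal{K}(R))$ of the continuous function $r_s\colon\mathrm{O}_{s<\infty}\to\mathbb{R}$, $\varphi\mapsto\varphi(1/s)^{-1}\varphi(r/s)$, where $s\in\mathrm{Loc}(R)$ is any element with $r/s\in R^{\mathrm{bd}}_{\mathrm{loc}}$ (the class does not depend on $s$). *)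

theory Defs
  imports "HOL-Analysis.Analysis"
begin

definition po_comm_ring :: "('a::comm_ring_1 \<Rightarrow> 'a \<Rightarrow> bool) \<Rightarrow> bool" where
  "po_comm_ring le \<longleftrightarrow>
     (\<forall>x. le x x) \<and> (\<forall>x y. le x y \<longrightarrow> le y x \<longrightarrow> x = y) \<and>
     (\<forall>x y z. le x y \<longrightarrow> le y z \<longrightarrow> le x z) \<and>
     (\<forall>r s t. le r s \<longrightarrow> le (r + t) (s + t)) \<and>
     (\<forall>a b. le 0 a \<longrightarrow> le 0 b \<longrightarrow> le 0 (a * b)) \<and>
     (\<forall>a. le 0 (a * a))"

definition po_field :: "('a::field \<Rightarrow> 'a \<Rightarrow> bool) \<Rightarrow> bool" where
  "po_field le \<longleftrightarrow> po_comm_ring le"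

definition archimedean_po :: "('a::comm_ring_1 \<Rightarrow> 'a \<Rightarrow> bool) \<Rightarrow> bool" where
  "archimedean_po le \<longleftrightarrow>
     (\<forall>g h. (\<forall>k::nat. k \<ge> 1 \<longrightarrow> le 0 (of_nat k * g + h)) \<longrightarrow> le 0 g)"

definition Loc :: "('a::comm_ring_1 \<Rightarrow> 'a \<Rightarrow> bool) \<Rightarrow> 'a set" where
  "Loc le = {s. le 0 (s - 1) \<and> (\<forall>r. le 0 (r * s) \<longrightarrow> le 0 r)}"

definition localizable :: "('a::comm_ring_1 \<Rightarrow> 'a \<Rightarrow> bool) \<Rightarrow> bool" where
  "localizable le \<longleftrightarrow> (\<forall>r. \<exists>s\<in>Loc le. le (- s) r \<and> le r s)"

section \<open>Localization: a fraction r/s is represented by the pair (r,s) with s in Loc\<close>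

definition loc_eq :: "'a::comm_ring_1 \<times> 'a \<Rightarrow> 'a \<times> 'a \<Rightarrow> bool" where
  "loc_eq a b \<longleftrightarrow> fst a * snd b = fst b * snd a"

definition loc_le :: "('a::comm_ring_1 \<Rightarrow> 'a \<Rightarrow> bool) \<Rightarrow> 'a \<times> 'a \<Rightarrow> 'a \<times> 'a \<Rightarrow> bool" where
  "loc_le le a b \<longleftrightarrow> le (fst a * snd b) (fst b * snd a)"

definition loc_add :: "'a::comm_ring_1 \<times> 'a \<Rightarrow> 'a \<times> 'a \<Rightarrow> 'a \<times> 'a" where
  "loc_add a b = (fst a * snd b + fst b * snd a, snd a * snd b)"

definition loc_mult :: "'a::comm_ring_1 \<times> 'a \<Rightarrow> 'a \<times> 'a \<Rightarrow> 'a \<times> 'a" where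
  "loc_mult a b = (fst a * fst b, snd a * snd b)"

text \<open>Representatives of elements of the bounded part of R_loc.\<close>
definition Loc_bd :: "('a::comm_ring_1 \<Rightarrow> 'a \<Rightarrow> bool) \<Rightarrow> ('a \<times> 'a) set" where
  "Loc_bd le = {a. snd a \<in> Loc le \<and>
      (\<exists>n::nat. loc_le le (- of_nat n, 1) a \<and> loc_le le a (of_nat n, 1))}"

text \<open>A character is represented as a real function on the representatives of
  bounded fractions (extensional outside), respecting equality of fractions.\<close>
definition Kset :: "('a::comm_ring_1 \<Rightarrow> 'a \<Rightarrow> bool) \<Rightarrow> ('a \<times> 'a \<Rightarrow> real) set" where
  "Kset le = {\<phi> \<in> Loc_bd le \<rightarrow>\<^sub>E (UNIV :: real set).
      (\<forall>a\<in>Loc_bd le. \<forall>b\<in>Loc_bd le. loc_eq a b \<longrightarrow> \<phi> a = \<phi> b) \<and>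
      (\<forall>a\<in>Loc_bd le. \<forall>b\<in>Loc_bd le. \<phi> (loc_add a b) = \<phi> a + \<phi> b) \<and>
      (\<forall>a\<in>Loc_bd le. \<forall>b\<in>Loc_bd le. \<phi> (loc_mult a b) = \<phi> a * \<phi> b) \<and>
      \<phi> (1, 1) = 1 \<and>
      (\<forall>a\<in>Loc_bd le. loc_le le (0, 1) a \<longrightarrow> \<phi> a \<ge> 0)}"

definition Ktop :: "('a::comm_ring_1 \<Rightarrow> 'a \<Rightarrow> bool) \<Rightarrow> ('a \<times> 'a \<Rightarrow> real) topology" where
  "Ktop le = subtopology (product_topology (\<lambda>_. euclideanreal) (Loc_bd le)) (Kset le)"

definition O_fin :: "('a::comm_ring_1 \<Rightarrow> 'a \<Rightarrow> bool) \<Rightarrow> 'a \<Rightarrow> ('a \<times> 'a \<Rightarrow> real) set" where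
  "O_fin le s = {\<phi> \<in> Kset le. \<phi> (1, s) > 0}"

section \<open>C_a.e.(X): partial continuous functions on dense open sets, as pairs (domain, function)\<close>

definition dense_open :: "'b topology \<Rightarrow> 'b set \<Rightarrow> bool" where
  "dense_open X U \<longleftrightarrow> openin X U \<and> X closure_of U = topspace X"

definition cae :: "'b topology \<Rightarrow> ('b set \<times> ('b \<Rightarrow> real)) set" where
  "cae X = {(U, f). dense_open X U \<and> continuous_map (subtopology X U) euclideanreal f}"

definition cae_eq :: "'b topology \<Rightarrow> 'b set \<times> ('b \<Rightarrow> real) \<Rightarrow> 'b set \<times> ('b \<Rightarrow> real) \<Rightarrow> bool" where
  "cae_eq X F G \<longleftrightarrow> (\<exists>W. dense_open X W \<and> W \<subseteq> fst F \<inter> fst G \<and> (\<forall>x\<in>W. snd F x = snd G x))"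

definition cae_le :: "'b topology \<Rightarrow> 'b set \<times> ('b \<Rightarrow> real) \<Rightarrow> 'b set \<times> ('b \<Rightarrow> real) \<Rightarrow> bool" where
  "cae_le X F G \<longleftrightarrow> (\<exists>W. dense_open X W \<and> W \<subseteq> fst F \<inter> fst G \<and> (\<forall>x\<in>W. snd F x \<le> snd G x))"

definition cae_add :: "'b set \<times> ('b \<Rightarrow> real) \<Rightarrow> 'b set \<times> ('b \<Rightarrow> real) \<Rightarrow> 'b set \<times> ('b \<Rightarrow> real)" where
  "cae_add F G = (fst F \<inter> fst G, \<lambda>x. snd F x + snd G x)"

definition cae_mult :: "'b set \<times> ('b \<Rightarrow> real) \<Rightarrow> 'b set \<times> ('b \<Rightarrow> real) \<Rightarrow> 'b set \<times> ('b \<Rightarrow> real)" where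
  "cae_mult F G = (fst F \<inter> fst G, \<lambda>x. snd F x * snd G x)"

definition cae_const :: "'b topology \<Rightarrow> real \<Rightarrow> 'b set \<times> ('b \<Rightarrow> real)" where
  "cae_const X c = (topspace X, \<lambda>_. c)"

section \<open>Extended Gelfand transformation (a representative of the class)\<close>

definition gelfand_rep :: "('a::comm_ring_1 \<Rightarrow> 'a \<Rightarrow> bool) \<Rightarrow> 'a \<Rightarrow> 'a \<Rightarrow> ('a \<times> 'a \<Rightarrow> real) set \<times> (('a \<times> 'a \<Rightarrow> real) \<Rightarrow> real)" where
  "gelfand_rep le s r = (O_fin le s, \<lambda>\<phi>. inverse (\<phi> (1, s)) * \<phi> (r, s))"

definition gelfand :: "('a::comm_ring_1 \<Rightarrow> 'a \<Rightarrow> bool) \<Rightarrow> 'a \<Rightarrow> ('a \<times> 'a \<Rightarrow> real) set \<times> (('a \<times> 'a \<Rightarrow> real) \<Rightarrow> real)" where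
  "gelfand le r = gelfand_rep le (SOME s. s \<in> Loc le \<and> (r, s) \<in> Loc_bd le) r"

end

theory Submission
  imports Defs
begin

text \<open>Characters of the archimedean ring of bounded fractions detect positivity: a bounded element
  that is not positive is sent to a negative number by the standard part with respect to a suitable
  total cone, found by Zorn's lemma. This is used twice: to show that every \<open>O\<^sub>s\<close> is dense, and to
  recover \<open>r \<ge> 0\<close> from the nonnegativity of its transform on a dense set. In between, the value
  \<open>\<phi>(r/s)/\<phi>(1/s)\<close> of the transform does not depend on \<open>s\<close> where it is defined, which makes the
  transformation a ring morphism up to equality on dense open sets.\<close>

definition positive_cone :: "'a::field set \<Rightarrow> bool" where
  "positive_cone C \<longleftrightarrow>
     (\<forall>x\<in>C. \<forall>y\<in>C. x + y \<in> C) \<and> (\<forall>x\<in>C. \<forall>y\<in>C. x * y \<in> C) \<and> (\<forall>x. x * x \<in> C) \<and> -1 \<notin> C"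

text \<open>The field is not assumed to be of class \<open>field_char_0\<close>, so the rationals are mapped into it
  by hand; a positive cone forces characteristic zero, which makes this a ring embedding.\<close>
definition rat_to_field :: "rat \<Rightarrow> 'a::field" where
  "rat_to_field q = (case quotient_of q of (p, d) \<Rightarrow> of_int p / of_int d)"

definition cone_bounded :: "'a::field set \<Rightarrow> 'a \<Rightarrow> bool" where
  "cone_bounded C x \<longleftrightarrow> (\<exists>n::nat. x + of_nat n \<in> C \<and> of_nat n - x \<in> C)"

definition cone_adjoin :: "'a::field set \<Rightarrow> 'a \<Rightarrow> 'a set" where
  "cone_adjoin C a = {m + a * n | m n. m \<in> C \<and> n \<in> C}"

lemma rat_fraction:
  obtains p d where "d > 0" "(q::rat) = of_int p / of_int d"
  by (metis quotient_of_denom_pos quotient_of_div surj_pair)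

lemma cone_bounded_mono: "C \<subseteq> D \<Longrightarrow> cone_bounded C x \<Longrightarrow> cone_bounded D x"
  unfolding cone_bounded_def by blast

lemma positive_cone_Union_chain:
  assumes "\<CC> \<noteq> {}" "\<And>X. X \<in> \<CC> \<Longrightarrow> positive_cone X" "\<And>X Y. X \<in> \<CC> \<Longrightarrow> Y \<in> \<CC> \<Longrightarrow> X \<subseteq> Y \<or> Y \<subseteq> X"
  shows "positive_cone (\<Union>\<CC>)"
  unfolding positive_cone_def
proof (intro conjI ballI allI)
  fix x y assume "x \<in> \<Union>\<CC>" "y \<in> \<Union>\<CC>"
  then obtain Z where Z: "Z \<in> \<CC>" "x \<in> Z" "y \<in> Z" using assms(3) by blast
  then have "x + y \<in> Z" "x * y \<in> Z" using assms(2)[OF Z(1)] unfolding positive_cone_def by blast+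
  then show "x + y \<in> \<Union>\<CC>" "x * y \<in> \<Union>\<CC>" using Z(1) by blast+
next
  fix x
  obtain Z where "Z \<in> \<CC>" using assms(1) by blast
  then show "x * x \<in> \<Union>\<CC>" using assms(2) unfolding positive_cone_def by blast
next
  show "-1 \<notin> \<Union>\<CC>" using assms(2) unfolding positive_cone_def by blast
qed

locale field_cone =
  fixes C :: "'a::field set"
  assumes positive_cone: "positive_cone C"
begin

lemma cone_add: "x \<in> C \<Longrightarrow> y \<in> C \<Longrightarrow> x + y \<in> C"
  and cone_mult: "x \<in> C \<Longrightarrow> y \<in> C \<Longrightarrow> x * y \<in> C"
  and cone_square: "x * x \<in> C"
  and minus_one_notin_cone: "-1 \<notin> C"
  using positive_cone unfolding positive_cone_def by blast+

lemma zero_in_cone: "0 \<in> C"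
  using cone_square[of 0] by simp

lemma one_in_cone: "1 \<in> C"
  using cone_square[of 1] by simp

lemma of_nat_in_cone: "of_nat n \<in> C"
  by (induction n) (auto simp: zero_in_cone one_in_cone cone_add)

lemma of_nat_neq_0: "n > 0 \<Longrightarrow> of_nat n \<noteq> (0::'a)"
proof
  assume "n > 0" "of_nat n = (0::'a)"
  then obtain m where "n = Suc m" by (cases n) auto
  with \<open>of_nat n = 0\<close> have "of_nat m = (-1::'a)" by (simp add: eq_neg_iff_add_eq_0 add.commute)
  then show False using of_nat_in_cone[of m] minus_one_notin_cone by simp
qed

lemma of_int_neq_0: "n \<noteq> 0 \<Longrightarrow> of_int n \<noteq> (0::'a)"
  using of_nat_neq_0[of "nat \<bar>n\<bar>"] by (cases "n > 0") auto

lemma inverse_in_cone: "x \<in> C \<Longrightarrow> inverse x \<in> C"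
proof -
  assume "x \<in> C"
  have "inverse x = x * (inverse x * inverse x)"
    by (cases "x = 0") (simp_all add: field_simps)
  then show ?thesis using cone_mult[OF \<open>x \<in> C\<close> cone_square[of "inverse x"]] by argo
qed

lemma cone_antisym: "x \<in> C \<Longrightarrow> -x \<in> C \<Longrightarrow> x = 0"
proof (rule ccontr)
  assume x: "x \<in> C" "-x \<in> C" "x \<noteq> 0"
  then have "-x * inverse x \<in> C" using cone_mult inverse_in_cone by blast
  with \<open>x \<noteq> 0\<close> show False using minus_one_notin_cone by simp
qed

subsection \<open>The rationals inside the field\<close>

lemma rat_to_field_frac:
  assumes "d \<noteq> 0" "q = of_int p / of_int d"
  shows "rat_to_field q = (of_int p / of_int d :: 'a)"
proof -
  obtain p' d' where qd: "quotient_of q = (p', d')" by (cases "quotient_of q") auto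
  have "d' > 0" using quotient_of_denom_pos[OF qd] .
  have "(of_int p' / of_int d' :: rat) = of_int p / of_int d"
    using quotient_of_div[OF qd] assms by simp
  then have "p' * d = p * d'"
    using assms(1) \<open>d' > 0\<close> by (simp add: frac_eq_eq flip: of_int_mult)
  then have "(of_int p' * of_int d :: 'a) = of_int p * of_int d'"
    by (simp flip: of_int_mult)
  then have "(of_int p' / of_int d' :: 'a) = of_int p / of_int d"
    using of_int_neq_0[OF assms(1)] of_int_neq_0[of d'] \<open>d' > 0\<close> by (simp add: frac_eq_eq)
  then show ?thesis using qd by (simp add: rat_to_field_def)
qed

lemma rat_to_field_of_int: "rat_to_field (of_int n) = (of_int n :: 'a)"
  using rat_to_field_frac[of 1 "of_int n" n] by simp

lemma rat_to_field_of_nat: "rat_to_field (of_nat n) = (of_nat n :: 'a)"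
  using rat_to_field_of_int[of "int n"] by simp

lemma rat_to_field_0: "rat_to_field 0 = (0::'a)"
  and rat_to_field_1: "rat_to_field 1 = (1::'a)"
  using rat_to_field_of_int[of 0] rat_to_field_of_int[of 1] by simp_all

lemma rat_to_field_add: "rat_to_field (q + r) = (rat_to_field q + rat_to_field r :: 'a)"
proof -
  obtain p d where pd: "d > 0" "q = of_int p / of_int d" by (rule rat_fraction)
  obtain p' d' where pd': "d' > 0" "r = of_int p' / of_int d'" by (rule rat_fraction)
  have "q + r = of_int (p * d' + p' * d) / of_int (d * d')"
    using pd pd' by (simp add: field_simps)
  then have "rat_to_field (q + r) = (of_int (p * d' + p' * d) / of_int (d * d') :: 'a)"
    using pd pd' by (intro rat_to_field_frac) auto
  also have "\<dots> = of_int p / of_int d + of_int p' / of_int d'"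
    using of_int_neq_0[of d] of_int_neq_0[of d'] pd pd' by (simp add: field_simps)
  finally show ?thesis using rat_to_field_frac[OF _ pd(2)] rat_to_field_frac[OF _ pd'(2)] pd pd' by simp
qed

lemma rat_to_field_mult: "rat_to_field (q * r) = (rat_to_field q * rat_to_field r :: 'a)"
proof -
  obtain p d where pd: "d > 0" "q = of_int p / of_int d" by (rule rat_fraction)
  obtain p' d' where pd': "d' > 0" "r = of_int p' / of_int d'" by (rule rat_fraction)
  have "q * r = of_int (p * p') / of_int (d * d')"
    using pd pd' by simp
  then have "rat_to_field (q * r) = (of_int (p * p') / of_int (d * d') :: 'a)"
    using pd pd' by (intro rat_to_field_frac) auto
  also have "\<dots> = of_int p / of_int d * (of_int p' / of_int d')"
    by simp
  finally show ?thesis using rat_to_field_frac[OF _ pd(2)] rat_to_field_frac[OF _ pd'(2)] pd pd' by simp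
qed

lemma rat_to_field_minus: "rat_to_field (- q) = (- rat_to_field q :: 'a)"
  using rat_to_field_add[of q "-q"] rat_to_field_0 by (simp add: eq_neg_iff_add_eq_0 add.commute)

lemma rat_to_field_diff: "rat_to_field (q - r) = (rat_to_field q - rat_to_field r :: 'a)"
  using rat_to_field_add[of q "-r"] rat_to_field_minus[of r] by simp

lemma rat_to_field_nonneg: "q \<ge> 0 \<Longrightarrow> (rat_to_field q :: 'a) \<in> C"
proof -
  assume "q \<ge> 0"
  obtain p d where pd: "d > 0" "q = of_int p / of_int d" by (rule rat_fraction)
  with \<open>q \<ge> 0\<close> have "p \<ge> 0" by (simp add: zero_le_divide_iff)
  have "rat_to_field q = (of_int p * inverse (of_int d) :: 'a)"
    using rat_to_field_frac[OF _ pd(2)] pd(1) by (simp add: field_simps)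
  moreover have "(of_int p :: 'a) \<in> C" "(of_int d :: 'a) \<in> C"
    using of_nat_in_cone[of "nat p"] of_nat_in_cone[of "nat d"] \<open>p \<ge> 0\<close> pd(1) by simp_all
  ultimately show ?thesis using cone_mult inverse_in_cone by simp
qed

lemma rat_to_field_eq_0_iff: "rat_to_field q = (0::'a) \<longleftrightarrow> q = 0"
proof
  assume "rat_to_field q = (0::'a)"
  obtain p d where pd: "d > 0" "q = of_int p / of_int d" by (rule rat_fraction)
  have "(of_int p / of_int d :: 'a) = 0" using \<open>rat_to_field q = 0\<close> rat_to_field_frac[OF _ pd(2)] pd(1) by simp
  then have "p = 0" using of_int_neq_0[of d] of_int_neq_0[of p] pd(1) by auto
  then show "q = 0" using pd by simp
qed (simp add: rat_to_field_0)

lemma rat_to_field_le_iff: "(rat_to_field r - rat_to_field q :: 'a) \<in> C \<longleftrightarrow> q \<le> r"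
proof
  assume "q \<le> r"
  then show "rat_to_field r - rat_to_field q \<in> C"
    using rat_to_field_nonneg[of "r - q"] by (simp add: rat_to_field_diff)
next
  assume r_q: "rat_to_field r - rat_to_field q \<in> C"
  show "q \<le> r"
  proof (rule ccontr)
    assume "\<not> q \<le> r"
    then have "rat_to_field q - rat_to_field r \<in> C"
      using rat_to_field_nonneg[of "q - r"] by (simp add: rat_to_field_diff)
    with r_q have "rat_to_field (r - q) = (0::'a)"
      using cone_antisym[of "rat_to_field r - rat_to_field q"] by (simp add: rat_to_field_diff)
    with \<open>\<not> q \<le> r\<close> show False by (simp add: rat_to_field_eq_0_iff)
  qed
qed

lemma cone_bounded_add: "cone_bounded C x \<Longrightarrow> cone_bounded C y \<Longrightarrow> cone_bounded C (x + y)"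
proof -
  assume "cone_bounded C x" "cone_bounded C y"
  then obtain n m :: nat where
    nm: "x + of_nat n \<in> C" "of_nat n - x \<in> C" "y + of_nat m \<in> C" "of_nat m - y \<in> C"
    unfolding cone_bounded_def by blast
  have "x + y + of_nat (n + m) = (x + of_nat n) + (y + of_nat m)"
    and "of_nat (n + m) - (x + y) = (of_nat n - x) + (of_nat m - y)" by simp_all
  then show ?thesis unfolding cone_bounded_def using nm cone_add by metis
qed

lemma cone_bounded_uminus: "cone_bounded C x \<Longrightarrow> cone_bounded C (- x)"
  unfolding cone_bounded_def by (simp add: add.commute, blast)

lemma cone_bounded_diff: "cone_bounded C x \<Longrightarrow> cone_bounded C y \<Longrightarrow> cone_bounded C (x - y)"
  using cone_bounded_add[of x "- y"] cone_bounded_uminus[of y] by simp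

lemma cone_bounded_mult: "cone_bounded C x \<Longrightarrow> cone_bounded C y \<Longrightarrow> cone_bounded C (x * y)"
proof -
  assume "cone_bounded C x" "cone_bounded C y"
  then obtain n m :: nat where
    nm: "x + of_nat n \<in> C" "of_nat n - x \<in> C" "y + of_nat m \<in> C" "of_nat m - y \<in> C"
    unfolding cone_bounded_def by blast
  define N M where "N = (of_nat n :: 'a)" and "M = (of_nat m :: 'a)"
  have NM: "N \<in> C" "M \<in> C" unfolding N_def M_def by (simp_all add: of_nat_in_cone)
  have "x * y + of_nat (3 * n * m) = (N - x) * (M - y) + N * (y + M) + M * (x + N)"
    and "of_nat (3 * n * m) - x * y = (N - x) * (M + y) + N * (M - y) + M * (N + x)"
    unfolding N_def M_def by (simp_all add: algebra_simps)
  moreover have "(N - x) * (M - y) + N * (y + M) + M * (x + N) \<in> C"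
    and "(N - x) * (M + y) + N * (M - y) + M * (N + x) \<in> C"
    using nm NM unfolding N_def[symmetric] M_def[symmetric] by (metis cone_add cone_mult add.commute)+
  ultimately show ?thesis unfolding cone_bounded_def by metis
qed

lemma cone_bounded_of_nat: "cone_bounded C (of_nat n)"
  unfolding cone_bounded_def using of_nat_in_cone[of "n + n"] zero_in_cone by (intro exI[of _ n]) auto

lemma cone_bounded_rat_to_field: "cone_bounded C (rat_to_field q)"
proof -
  obtain n :: nat where "\<bar>q\<bar> < of_nat n" using reals_Archimedean2 by blast
  then have "rat_to_field (q + of_nat n) \<in> C" "rat_to_field (of_nat n - q) \<in> C"
    using rat_to_field_nonneg by simp_all
  then show ?thesis
    unfolding cone_bounded_def by (auto simp: rat_to_field_add rat_to_field_diff rat_to_field_of_nat)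
qed

lemma cone_bounded_sum:
  "finite J \<Longrightarrow> (\<And>j. j \<in> J \<Longrightarrow> cone_bounded C (f j)) \<Longrightarrow> cone_bounded C (sum f J)"
  by (induction J rule: finite_induct) (auto simp: cone_bounded_add cone_bounded_of_nat[of 0, simplified])

subsection \<open>Adjoining an element to a cone\<close>

lemma in_cone_adjoinI: "m \<in> C \<Longrightarrow> n \<in> C \<Longrightarrow> x = m + a * n \<Longrightarrow> x \<in> cone_adjoin C a"
  unfolding cone_adjoin_def by blast

lemma subset_cone_adjoin: "C \<subseteq> cone_adjoin C a"
  using in_cone_adjoinI[of _ 0] zero_in_cone by auto

lemma in_cone_adjoin: "a \<in> cone_adjoin C a"
  using in_cone_adjoinI[of 0 1 a] zero_in_cone one_in_cone by simp

lemma positive_cone_adjoin: "-1 \<notin> cone_adjoin C a \<Longrightarrow> positive_cone (cone_adjoin C a)"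
  unfolding positive_cone_def
proof (intro conjI ballI allI)
  fix x y assume "x \<in> cone_adjoin C a" "y \<in> cone_adjoin C a"
  then obtain m1 n1 m2 n2 where h: "x = m1 + a * n1" "y = m2 + a * n2" "m1 \<in> C" "n1 \<in> C" "m2 \<in> C" "n2 \<in> C"
    unfolding cone_adjoin_def by blast
  have "x + y = (m1 + m2) + a * (n1 + n2)" using h by (simp add: algebra_simps)
  then show "x + y \<in> cone_adjoin C a"
    by (rule in_cone_adjoinI[OF cone_add[OF h(3,5)] cone_add[OF h(4,6)]])
  have "x * y = (m1 * m2 + (a * a) * (n1 * n2)) + a * (m1 * n2 + n1 * m2)"
    using h by (simp add: algebra_simps)
  then show "x * y \<in> cone_adjoin C a"
    by (rule in_cone_adjoinI[OF cone_add[OF cone_mult[OF h(3,5)] cone_mult[OF cone_square cone_mult[OF h(4,6)]]]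
          cone_add[OF cone_mult[OF h(3,6)] cone_mult[OF h(4,5)]]])
next
  show "x * x \<in> cone_adjoin C a" for x using subset_cone_adjoin cone_square by blast
qed

text \<open>If both \<open>a\<close> and \<open>-a\<close> were unusable, \<open>-1 = m1 + a n1\<close> and \<open>-1 = m2 - a n2\<close> would give
  \<open>a\<^sup>2 n1 n2 = -(1 + m1)(1 + m2)\<close>, exhibiting \<open>-1\<close> as a quotient of cone elements.\<close>
lemma cone_adjoin_proper_either: "-1 \<notin> cone_adjoin C a \<or> -1 \<notin> cone_adjoin C (-a)"
proof (rule ccontr)
  assume "\<not> ?thesis"
  then obtain m1 n1 m2 n2 where h: "-1 = m1 + a * n1" "-1 = m2 + (-a) * n2" "m1 \<in> C" "n1 \<in> C" "m2 \<in> C" "n2 \<in> C"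
    unfolding cone_adjoin_def by blast
  define u where "u = (1 + m1) * (1 + m2)"
  have "1 + m1 \<noteq> 0" "1 + m2 \<noteq> 0"
    using h(3,5) minus_one_notin_cone by (auto simp: add_eq_0_iff)
  then have "u \<noteq> 0" unfolding u_def by simp
  have "u \<in> C" unfolding u_def by (rule cone_mult[OF cone_add[OF one_in_cone h(3)] cone_add[OF one_in_cone h(5)]])
  have "a * n1 = -(1 + m1)" using h(1) by (simp add: algebra_simps)
  moreover have "a * n2 = 1 + m2" using h(2) by (simp add: algebra_simps)
  ultimately have "(a * n1) * (a * n2) = - u" unfolding u_def by (metis minus_mult_left)
  then have "(a * a) * (n1 * n2) * inverse u = -1" using \<open>u \<noteq> 0\<close> by (simp add: algebra_simps)
  moreover have "(a * a) * (n1 * n2) * inverse u \<in> C"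
    using h(4,6) \<open>u \<in> C\<close> by (intro cone_mult cone_square inverse_in_cone)
  ultimately show False using minus_one_notin_cone by simp
qed

lemma cone_adjoin_minus_proper: "c \<notin> C \<Longrightarrow> -1 \<notin> cone_adjoin C (-c)"
proof
  assume "c \<notin> C" "-1 \<in> cone_adjoin C (-c)"
  then obtain m n where mn: "m \<in> C" "n \<in> C" "-1 = m + (-c) * n" unfolding cone_adjoin_def by blast
  show False
  proof (cases "n = 0")
    case True
    then show False using mn minus_one_notin_cone by simp
  next
    case False
    with mn(3) have "c = (1 + m) * inverse n" by (simp add: field_simps)
    moreover have "(1 + m) * inverse n \<in> C" using mn one_in_cone by (intro cone_mult cone_add inverse_in_cone)
    ultimately show False using \<open>c \<notin> C\<close> by simp
  qed
qed

lemma maximal_cone_total: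
  assumes "\<And>X. positive_cone X \<Longrightarrow> C \<subseteq> X \<Longrightarrow> X = C"
  shows "y \<in> C \<or> - y \<in> C"
proof -
  obtain b where "b = y \<or> b = -y" "-1 \<notin> cone_adjoin C b"
    using cone_adjoin_proper_either[of y] by blast
  moreover have "cone_adjoin C b = C"
    by (rule assms[OF positive_cone_adjoin[OF \<open>-1 \<notin> cone_adjoin C b\<close>] subset_cone_adjoin])
  ultimately show ?thesis using in_cone_adjoin[of b] by auto
qed

end

lemma positive_cone_extend_total:
  assumes "positive_cone C"
  obtains M where "positive_cone M" "C \<subseteq> M" "\<And>y. y \<in> M \<or> - y \<in> M"
proof -
  let ?A = "{M. positive_cone M \<and> C \<subseteq> M}"
  have "\<exists>M\<in>?A. \<forall>X\<in>?A. M \<subseteq> X \<longrightarrow> X = M"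
  proof (rule subset_Zorn_nonempty)
    show "?A \<noteq> {}" using assms by blast
  next
    fix \<CC> assume "\<CC> \<noteq> {}" "subset.chain ?A \<CC>"
    then have "\<CC> \<subseteq> ?A" "\<And>X Y. X \<in> \<CC> \<Longrightarrow> Y \<in> \<CC> \<Longrightarrow> X \<subseteq> Y \<or> Y \<subseteq> X"
      unfolding subset_chain_def by auto
    with \<open>\<CC> \<noteq> {}\<close> show "\<Union>\<CC> \<in> ?A"
      using positive_cone_Union_chain[of \<CC>] by blast
  qed
  then obtain M where M: "positive_cone M" "C \<subseteq> M" and max: "\<forall>X\<in>?A. M \<subseteq> X \<longrightarrow> X = M"
    by blast
  interpret M: field_cone M using M(1) by unfold_locales
  have "y \<in> M \<or> - y \<in> M" for y
  proof (rule M.maximal_cone_total)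
    fix X assume "positive_cone X" "M \<subseteq> X"
    then show "X = M" using max M(2) by blast
  qed
  with M show ?thesis using that by blast
qed

subsection \<open>The standard part with respect to a total cone\<close>

definition std_part :: "'a::field set \<Rightarrow> 'a \<Rightarrow> real" where
  "std_part C x = Sup {real_of_rat q | q. x - rat_to_field q \<in> C}"

locale total_field_cone = field_cone +
  assumes total: "x \<in> C \<or> - x \<in> C"
begin

lemma std_part_set:
  assumes "cone_bounded C x"
  shows "{real_of_rat q | q. x - rat_to_field q \<in> C} \<noteq> {}"
    and "bdd_above {real_of_rat q | q. x - rat_to_field q \<in> C}"
proof -
  obtain n :: nat where n: "x + of_nat n \<in> C" "of_nat n - x \<in> C"
    using assms unfolding cone_bounded_def by blast
  then have "x - rat_to_field (- of_nat n) \<in> C" by (simp add: rat_to_field_minus rat_to_field_of_nat)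
  then show "{real_of_rat q | q. x - rat_to_field q \<in> C} \<noteq> {}" by blast
  have "real_of_rat q \<le> of_nat n" if "x - rat_to_field q \<in> C" for q
  proof -
    have "(of_nat n - x) + (x - rat_to_field q) \<in> C" using cone_add n(2) that by blast
    then have "q \<le> of_nat n" by (simp add: rat_to_field_le_iff flip: rat_to_field_of_nat)
    then show ?thesis by (metis of_rat_less_eq of_rat_of_nat_eq)
  qed
  then show "bdd_above {real_of_rat q | q. x - rat_to_field q \<in> C}" unfolding bdd_above_def by blast
qed

lemma std_part_ge: "cone_bounded C x \<Longrightarrow> x - rat_to_field q \<in> C \<Longrightarrow> real_of_rat q \<le> std_part C x"
  unfolding std_part_def by (rule cSup_upper) (auto dest: std_part_set)

lemma std_part_le:
  assumes "cone_bounded C x" "rat_to_field q - x \<in> C"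
  shows "std_part C x \<le> real_of_rat q"
  unfolding std_part_def
proof (rule cSup_least)
  show "{real_of_rat q | q. x - rat_to_field q \<in> C} \<noteq> {}" using std_part_set[OF assms(1)] by blast
  fix y assume "y \<in> {real_of_rat q | q. x - rat_to_field q \<in> C}"
  then obtain q' where q': "y = real_of_rat q'" "x - rat_to_field q' \<in> C" by blast
  have "(rat_to_field q - x) + (x - rat_to_field q') \<in> C" using cone_add assms(2) q'(2) by blast
  then have "q' \<le> q" by (simp add: rat_to_field_le_iff)
  then show "y \<le> real_of_rat q" using q'(1) by (simp add: of_rat_less_eq)
qed

lemma less_std_part_imp:
  assumes "cone_bounded C x" "real_of_rat q < std_part C x"
  shows "x - rat_to_field q \<in> C"
  using total[of "x - rat_to_field q"] std_part_le[OF assms(1), of q] assms(2) by force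

lemma std_part_less_imp:
  assumes "cone_bounded C x" "std_part C x < real_of_rat q"
  shows "rat_to_field q - x \<in> C"
  using total[of "rat_to_field q - x"] std_part_ge[OF assms(1), of q] assms(2) by force

lemma std_part_geI:
  assumes "cone_bounded C x" "\<And>q. real_of_rat q < r \<Longrightarrow> x - rat_to_field q \<in> C"
  shows "r \<le> std_part C x"
proof (rule ccontr)
  assume "\<not> r \<le> std_part C x"
  then obtain q where "std_part C x < real_of_rat q" "real_of_rat q < r"
    using of_rat_dense[of "std_part C x" r] by auto
  then show False using std_part_ge[OF assms(1) assms(2)] by force
qed

lemma std_part_leI:
  assumes "cone_bounded C x" "\<And>q. r < real_of_rat q \<Longrightarrow> rat_to_field q - x \<in> C"
  shows "std_part C x \<le> r"
proof (rule ccontr)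
  assume "\<not> std_part C x \<le> r"
  then obtain q where "r < real_of_rat q" "real_of_rat q < std_part C x"
    using of_rat_dense[of r "std_part C x"] by auto
  then show False using std_part_le[OF assms(1) assms(2)] by force
qed

lemma std_part_rat_to_field: "std_part C (rat_to_field q) = real_of_rat q"
  using std_part_ge[OF cone_bounded_rat_to_field, of q q] std_part_le[OF cone_bounded_rat_to_field, of q q]
    zero_in_cone by simp

lemma std_part_of_nat: "std_part C (of_nat n) = real n"
  using std_part_rat_to_field[of "of_nat n"] by (simp add: rat_to_field_of_nat)

lemma std_part_nonneg: "cone_bounded C x \<Longrightarrow> x \<in> C \<Longrightarrow> 0 \<le> std_part C x"
  using std_part_ge[of x 0] by (simp add: rat_to_field_0)

lemma std_part_add:
  assumes "cone_bounded C x" "cone_bounded C y"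
  shows "std_part C (x + y) = std_part C x + std_part C y"
proof (rule order.antisym)
  show "std_part C x + std_part C y \<le> std_part C (x + y)"
  proof (rule std_part_geI[OF cone_bounded_add[OF assms]])
    fix q assume "real_of_rat q < std_part C x + std_part C y"
    then obtain q1 where q1: "real_of_rat q - std_part C y < real_of_rat q1" "real_of_rat q1 < std_part C x"
      using of_rat_dense[of "real_of_rat q - std_part C y" "std_part C x"] by auto
    then have "real_of_rat (q - q1) < std_part C y" by (simp add: of_rat_diff)
    then have "(x - rat_to_field q1) + (y - rat_to_field (q - q1)) \<in> C"
      using less_std_part_imp assms q1(2) cone_add by blast
    then show "x + y - rat_to_field q \<in> C" by (simp add: rat_to_field_diff algebra_simps)
  qed
  show "std_part C (x + y) \<le> std_part C x + std_part C y"
  proof (rule std_part_leI[OF cone_bounded_add[OF assms]])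
    fix q assume "std_part C x + std_part C y < real_of_rat q"
    then obtain q1 where q1: "std_part C x < real_of_rat q1" "real_of_rat q1 < real_of_rat q - std_part C y"
      using of_rat_dense[of "std_part C x" "real_of_rat q - std_part C y"] by auto
    then have "std_part C y < real_of_rat (q - q1)" by (simp add: of_rat_diff)
    then have "(rat_to_field q1 - x) + (rat_to_field (q - q1) - y) \<in> C"
      using std_part_less_imp assms q1(1) cone_add by blast
    then show "rat_to_field q - (x + y) \<in> C" by (simp add: rat_to_field_diff algebra_simps)
  qed
qed

text \<open>Multiplicativity on nonnegative elements: approximate the product \<open>q\<close> of rationals by
  \<open>q1 \<cdot> (q/q1)\<close> and use \<open>x y - q1 (q/q1) = (x - q1) y + q1 (y - q/q1)\<close>.\<close>
lemma std_part_mult_nonneg_ge: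
  assumes "cone_bounded C x" "cone_bounded C y" "x \<in> C" "y \<in> C"
  shows "std_part C x * std_part C y \<le> std_part C (x * y)"
proof (rule std_part_geI[OF cone_bounded_mult[OF assms(1,2)]])
  fix q assume q: "real_of_rat q < std_part C x * std_part C y"
  show "x * y - rat_to_field q \<in> C"
  proof (cases "q \<le> 0")
    case True
    then have "x * y + rat_to_field (- q) \<in> C"
      using rat_to_field_nonneg cone_add cone_mult assms(3,4) by simp
    then show ?thesis by (simp add: rat_to_field_minus)
  next
    case False
    have "0 \<le> std_part C x" "0 \<le> std_part C y" using std_part_nonneg assms by auto
    moreover have "0 < std_part C x * std_part C y" using q False
      by (metis not_le of_rat_less order.strict_trans of_rat_0)
    ultimately have y_pos: "0 < std_part C y"
      by (auto simp: zero_less_mult_iff)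
    then have "real_of_rat q / std_part C y < std_part C x" using q by (simp add: divide_less_eq)
    then obtain q1 where q1: "real_of_rat q / std_part C y < real_of_rat q1" "real_of_rat q1 < std_part C x"
      using of_rat_dense by blast
    have "0 < q1" using q1(1) False y_pos
      by (metis divide_pos_pos not_le order.strict_trans of_rat_less_0_iff zero_less_of_rat_iff)
    have "real_of_rat (q / q1) < std_part C y"
      using q1(1) y_pos \<open>0 < q1\<close> by (simp add: of_rat_divide field_simps)
    then have "(x - rat_to_field q1) * y + rat_to_field q1 * (y - rat_to_field (q / q1)) \<in> C"
      using less_std_part_imp assms q1(2) \<open>0 < q1\<close> rat_to_field_nonneg cone_add cone_mult by simp
    moreover have "rat_to_field q = (rat_to_field q1 * rat_to_field (q / q1) :: 'a)"
      using \<open>0 < q1\<close> by (simp flip: rat_to_field_mult)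
    ultimately show ?thesis by (simp add: algebra_simps)
  qed
qed

lemma std_part_mult_nonneg_le:
  assumes "cone_bounded C x" "cone_bounded C y" "x \<in> C" "y \<in> C"
  shows "std_part C (x * y) \<le> std_part C x * std_part C y"
proof (rule std_part_leI[OF cone_bounded_mult[OF assms(1,2)]])
  fix q assume q: "std_part C x * std_part C y < real_of_rat q"
  have x_nonneg: "0 \<le> std_part C x" and y_nonneg: "0 \<le> std_part C y" using std_part_nonneg assms by auto
  obtain q1 where q1: "std_part C x < real_of_rat q1" "real_of_rat q1 * std_part C y < real_of_rat q"
  proof (cases "std_part C y = 0")
    case True
    obtain q1 where "std_part C x < real_of_rat q1" using of_rat_dense[of "std_part C x" "std_part C x + 1"] by auto
    with True q that show ?thesis by simp
  next
    case False
    with y_nonneg have "0 < std_part C y" by simp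
    with q have "std_part C x < real_of_rat q / std_part C y" by (simp add: less_divide_eq)
    then obtain q1 where "std_part C x < real_of_rat q1" "real_of_rat q1 < real_of_rat q / std_part C y"
      using of_rat_dense by blast
    with \<open>0 < std_part C y\<close> that show ?thesis by (simp add: less_divide_eq)
  qed
  have "0 < q1" using q1(1) x_nonneg by (metis order.strict_trans1 zero_less_of_rat_iff)
  have "std_part C y < real_of_rat (q / q1)"
    using q1(2) \<open>0 < q1\<close> by (simp add: of_rat_divide field_simps)
  then have "rat_to_field q1 * (rat_to_field (q / q1) - y) + (rat_to_field q1 - x) * y \<in> C"
    using std_part_less_imp assms q1(1) \<open>0 < q1\<close> rat_to_field_nonneg cone_add cone_mult by simp
  moreover have "rat_to_field q = (rat_to_field q1 * rat_to_field (q / q1) :: 'a)"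
    using \<open>0 < q1\<close> by (simp flip: rat_to_field_mult)
  ultimately show "rat_to_field q - x * y \<in> C" by (simp add: algebra_simps)
qed

lemma std_part_of_nat_mult: "cone_bounded C y \<Longrightarrow> std_part C (of_nat n * y) = real n * std_part C y"
proof (induction n)
  case 0
  then show ?case using std_part_of_nat[of 0] by simp
next
  case (Suc n)
  have "of_nat (Suc n) * y = y + of_nat n * y" by (simp add: algebra_simps)
  then show ?case
    using Suc std_part_add[of y "of_nat n * y"] cone_bounded_mult[OF cone_bounded_of_nat Suc.prems]
    by (simp add: algebra_simps)
qed

text \<open>The general case reduces to the nonnegative one by shifting both factors by integers.\<close>
lemma std_part_mult:
  assumes "cone_bounded C x" "cone_bounded C y"
  shows "std_part C (x * y) = std_part C x * std_part C y"
proof -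
  obtain n m :: nat where n: "x + of_nat n \<in> C" and m: "y + of_nat m \<in> C"
    using assms unfolding cone_bounded_def by blast
  have bounded: "cone_bounded C (x + of_nat n)" "cone_bounded C (y + of_nat m)"
    "cone_bounded C (x * y)" "cone_bounded C (of_nat n * y)" "cone_bounded C (of_nat m * x)"
    using assms cone_bounded_add cone_bounded_mult cone_bounded_of_nat by blast+
  have "(x + of_nat n) * (y + of_nat m) = x * y + (of_nat n * y + (of_nat m * x + of_nat (n * m)))"
    by (simp add: algebra_simps)
  then have "std_part C ((x + of_nat n) * (y + of_nat m))
      = std_part C (x * y) + (n * std_part C y + (m * std_part C x + n * m))"
    using bounded assms by (simp add: std_part_add cone_bounded_add cone_bounded_of_nat std_part_of_nat_mult
        std_part_of_nat del: of_nat_mult)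
  moreover have "std_part C ((x + of_nat n) * (y + of_nat m)) = (std_part C x + n) * (std_part C y + m)"
    using std_part_mult_nonneg_ge[OF bounded(1,2) n m] std_part_mult_nonneg_le[OF bounded(1,2) n m]
      std_part_add assms cone_bounded_of_nat std_part_of_nat by simp
  ultimately show ?thesis by (simp add: algebra_simps)
qed

end

lemma dense_open_Int: "dense_open X U \<Longrightarrow> dense_open X V \<Longrightarrow> dense_open X (U \<inter> V)"
  unfolding dense_open_def dense_intersects_open by (metis inf_assoc openin_Int)

locale archimedean_po_field =
  fixes le :: "'a::field \<Rightarrow> 'a \<Rightarrow> bool"
  assumes po_field: "po_field le" and archimedean: "archimedean_po le"
begin

abbreviation Pos :: "'a set" where "Pos \<equiv> {x. le 0 x}"

lemma le_antisym: "le x y \<Longrightarrow> le y x \<Longrightarrow> x = y"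
  and le_trans: "le x y \<Longrightarrow> le y z \<Longrightarrow> le x z"
  and le_add_right: "le r s \<Longrightarrow> le (r + t) (s + t)"
  and le_mult: "le 0 a \<Longrightarrow> le 0 b \<Longrightarrow> le 0 (a * b)"
  and le_square: "le 0 (a * a)"
  using po_field unfolding po_field_def po_comm_ring_def by blast+

text \<open>Not a rewrite rule: its right-hand side contains \<open>le 0 _\<close> again, so the simplifier loops.\<close>
lemma le_iff_diff_Pos: "le x y \<longleftrightarrow> y - x \<in> Pos"
  using le_add_right[of x y "-x"] le_add_right[of 0 "y - x" x] by auto

sublocale field_cone Pos
proof
  show "positive_cone Pos" unfolding positive_cone_def
  proof (intro conjI ballI allI)
    fix x y assume "x \<in> Pos" "y \<in> Pos"
    then show "x + y \<in> Pos" using le_add_right[of 0 x y] le_trans[of 0 y "x + y"] by simp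
    show "x * y \<in> Pos" using le_mult \<open>x \<in> Pos\<close> \<open>y \<in> Pos\<close> by simp
  next
    show "x * x \<in> Pos" for x using le_square by simp
  next
    have "le 0 1" using le_square[of 1] by simp
    then show "-1 \<notin> Pos" using le_add_right[of 0 "-1" 1] le_antisym by fastforce
  qed
qed

lemma archimedean_Pos: "(\<And>k::nat. k \<ge> 1 \<Longrightarrow> of_nat k * g + h \<in> Pos) \<Longrightarrow> g \<in> Pos"
  using archimedean unfolding archimedean_po_def by blast

lemma Loc_iff: "s \<in> Loc le \<longleftrightarrow> s - 1 \<in> Pos"
proof
  assume s: "s - 1 \<in> Pos"
  then have "s \<in> Pos" "s \<noteq> 0" using cone_add[OF s one_in_cone] minus_one_notin_cone by auto
  have "x \<in> Pos" if "x * s \<in> Pos" for x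
    using cone_mult[OF that inverse_in_cone[OF \<open>s \<in> Pos\<close>]] \<open>s \<noteq> 0\<close> by (simp add: mult.assoc)
  with s show "s \<in> Loc le" unfolding Loc_def by simp
qed (simp add: Loc_def)

lemma Loc_in_Pos: "s \<in> Loc le \<Longrightarrow> s \<in> Pos"
  unfolding Loc_iff using cone_add[OF _ one_in_cone] by fastforce

lemma Loc_nonzero: "s \<in> Loc le \<Longrightarrow> s \<noteq> 0"
  unfolding Loc_iff using minus_one_notin_cone by auto

lemma inverse_Loc_in_Pos: "s \<in> Loc le \<Longrightarrow> inverse s \<in> Pos"
  using Loc_in_Pos inverse_in_cone by blast

lemma mult_Loc_in_Pos_iff: "s \<in> Loc le \<Longrightarrow> x * s \<in> Pos \<longleftrightarrow> x \<in> Pos"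
  using Loc_in_Pos cone_mult unfolding Loc_def by blast

lemma Loc_mult: "s \<in> Loc le \<Longrightarrow> t \<in> Loc le \<Longrightarrow> s * t \<in> Loc le"
proof -
  assume "s \<in> Loc le" "t \<in> Loc le"
  then have "(s - 1) * (t - 1) + ((s - 1) + (t - 1)) \<in> Pos"
    unfolding Loc_iff by (intro cone_add cone_mult)
  moreover have "s * t - 1 = (s - 1) * (t - 1) + ((s - 1) + (t - 1))" by (simp add: algebra_simps)
  ultimately show ?thesis unfolding Loc_iff by metis
qed

lemma cone_bounded_inverse_Loc: "s \<in> Loc le \<Longrightarrow> cone_bounded Pos (inverse s)"
proof -
  assume s: "s \<in> Loc le"
  have "inverse s + of_nat 1 \<in> Pos" using cone_add[OF inverse_Loc_in_Pos[OF s] one_in_cone] by simp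
  moreover have "of_nat 1 - inverse s = (s - 1) * inverse s" using Loc_nonzero[OF s] by (simp add: field_simps)
  moreover have "(s - 1) * inverse s \<in> Pos" using s cone_mult inverse_Loc_in_Pos unfolding Loc_iff by blast
  ultimately show ?thesis unfolding cone_bounded_def by metis
qed

lemma Loc_bd_iff: "(a, s) \<in> Loc_bd le \<longleftrightarrow> s \<in> Loc le \<and> cone_bounded Pos (a / s)"
proof -
  have "(a, s) \<in> Loc_bd le \<longleftrightarrow>
      s \<in> Loc le \<and> (\<exists>n::nat. le (- of_nat n * s) (a * 1) \<and> le (a * 1) (of_nat n * s))"
    unfolding Loc_bd_def loc_le_def by (simp only: mem_Collect_eq fst_conv snd_conv)
  moreover have "le (- of_nat n * s) (a * 1) \<longleftrightarrow> a / s + of_nat n \<in> Pos"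
    and "le (a * 1) (of_nat n * s) \<longleftrightarrow> of_nat n - a / s \<in> Pos" if "s \<in> Loc le" for n
  proof -
    have "a * 1 - (- of_nat n * s) = (a / s + of_nat n) * s"
      and "of_nat n * s - a * 1 = (of_nat n - a / s) * s"
      using Loc_nonzero[OF that] by (simp_all add: field_simps)
    then show "le (- of_nat n * s) (a * 1) \<longleftrightarrow> a / s + of_nat n \<in> Pos"
      and "le (a * 1) (of_nat n * s) \<longleftrightarrow> of_nat n - a / s \<in> Pos"
      using le_iff_diff_Pos mult_Loc_in_Pos_iff[OF that] by metis+
  qed
  ultimately show ?thesis unfolding cone_bounded_def by auto
qed

lemma one_in_Loc: "1 \<in> Loc le"
  unfolding Loc_iff using zero_in_cone by simp

lemma Loc_bd_one_iff: "(x, 1) \<in> Loc_bd le \<longleftrightarrow> cone_bounded Pos x"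
  using Loc_bd_iff one_in_Loc by simp

lemma Loc_bdD: "a \<in> Loc_bd le \<Longrightarrow> snd a \<in> Loc le"
  and Loc_bd_cone_bounded: "a \<in> Loc_bd le \<Longrightarrow> cone_bounded Pos (fst a / snd a)"
  using Loc_bd_iff[of "fst a" "snd a"] by auto

lemma one_Loc_in_Loc_bd: "s \<in> Loc le \<Longrightarrow> (1, s) \<in> Loc_bd le"
  using Loc_bd_iff cone_bounded_inverse_Loc by (simp add: divide_inverse)

lemma loc_add_in_Loc_bd:
  assumes "a \<in> Loc_bd le" "b \<in> Loc_bd le"
  shows "loc_add a b \<in> Loc_bd le"
    and "fst (loc_add a b) / snd (loc_add a b) = fst a / snd a + fst b / snd b"
proof -
  show *: "fst (loc_add a b) / snd (loc_add a b) = fst a / snd a + fst b / snd b"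
    unfolding loc_add_def using Loc_nonzero[OF Loc_bdD] assms by (simp add: field_simps)
  show "loc_add a b \<in> Loc_bd le"
    using Loc_bd_iff[of "fst (loc_add a b)" "snd (loc_add a b)"] *
      Loc_mult[OF Loc_bdD[OF assms(1)] Loc_bdD[OF assms(2)]] cone_bounded_add[OF Loc_bd_cone_bounded[OF assms(1)] Loc_bd_cone_bounded[OF assms(2)]]
    by (simp add: loc_add_def)
qed

lemma loc_mult_in_Loc_bd:
  assumes "a \<in> Loc_bd le" "b \<in> Loc_bd le"
  shows "loc_mult a b \<in> Loc_bd le"
    and "fst (loc_mult a b) / snd (loc_mult a b) = (fst a / snd a) * (fst b / snd b)"
proof -
  show *: "fst (loc_mult a b) / snd (loc_mult a b) = (fst a / snd a) * (fst b / snd b)"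
    unfolding loc_mult_def by simp
  show "loc_mult a b \<in> Loc_bd le"
    using Loc_bd_iff[of "fst (loc_mult a b)" "snd (loc_mult a b)"] *
      Loc_mult[OF Loc_bdD[OF assms(1)] Loc_bdD[OF assms(2)]] cone_bounded_mult[OF Loc_bd_cone_bounded[OF assms(1)] Loc_bd_cone_bounded[OF assms(2)]]
    by (simp add: loc_mult_def)
qed

text \<open>The witness is \<open>s = 1 + r\<^sup>2\<close>: \<open>2 (s \<plusminus> r) = (1 \<plusminus> r)\<^sup>2 + s\<close>.\<close>
lemma localizable: "localizable le"
  unfolding localizable_def
proof
  fix r :: 'a
  define s where "s = 1 + r * r"
  have "(2::'a) \<noteq> 0" using of_nat_neq_0[of 2] by simp
  then have minus: "s - r = inverse 2 * ((1 - r) * (1 - r) + s)"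
    and plus: "s + r = inverse 2 * ((1 + r) * (1 + r) + s)"
    unfolding s_def by (simp_all add: field_simps)
  have half: "inverse 2 \<in> Pos" using inverse_in_cone[OF of_nat_in_cone[of 2]] by simp
  have "s \<in> Pos" unfolding s_def by (rule cone_add[OF one_in_cone cone_square])
  then have "s - r \<in> Pos" "s + r \<in> Pos"
    unfolding minus plus by (intro cone_mult[OF half] cone_add cone_square; assumption)+
  then have "le (- s) r" "le r s"
    using le_iff_diff_Pos[of "- s" r] le_iff_diff_Pos[of r s] by (simp_all add: add.commute)
  moreover have "s \<in> Loc le" unfolding Loc_iff s_def using cone_square by simp
  ultimately show "\<exists>s\<in>Loc le. le (- s) r \<and> le r s" by blast
qed

subsection \<open>Characters\<close>

lemma KsetD:
  assumes "\<phi> \<in> Kset le"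
  shows "\<And>a. a \<notin> Loc_bd le \<Longrightarrow> \<phi> a = undefined"
    and "\<And>a b. a \<in> Loc_bd le \<Longrightarrow> b \<in> Loc_bd le \<Longrightarrow> loc_eq a b \<Longrightarrow> \<phi> a = \<phi> b"
    and "\<And>a b. a \<in> Loc_bd le \<Longrightarrow> b \<in> Loc_bd le \<Longrightarrow> \<phi> (loc_add a b) = \<phi> a + \<phi> b"
    and "\<And>a b. a \<in> Loc_bd le \<Longrightarrow> b \<in> Loc_bd le \<Longrightarrow> \<phi> (loc_mult a b) = \<phi> a * \<phi> b"
    and "\<phi> (1, 1) = 1"
    and "\<And>a. a \<in> Loc_bd le \<Longrightarrow> loc_le le (0, 1) a \<Longrightarrow> \<phi> a \<ge> 0"
  using assms unfolding Kset_def by (auto simp: PiE_def extensional_def)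

lemma character_fraction:
  assumes "\<phi> \<in> Kset le" "a \<in> Loc_bd le"
  shows "\<phi> a = \<phi> (fst a / snd a, 1)"
proof -
  have "(fst a / snd a, 1) \<in> Loc_bd le" using Loc_bd_one_iff Loc_bd_cone_bounded[OF assms(2)] by simp
  moreover have "loc_eq a (fst a / snd a, 1)" unfolding loc_eq_def using Loc_nonzero[OF Loc_bdD[OF assms(2)]] by simp
  ultimately show ?thesis using KsetD(2)[OF assms(1) assms(2)] by blast
qed

lemma character_one_Loc: "\<phi> \<in> Kset le \<Longrightarrow> s \<in> Loc le \<Longrightarrow> \<phi> (1, s) = \<phi> (inverse s, 1)"
  using character_fraction[OF _ one_Loc_in_Loc_bd] by (simp add: divide_inverse)

context
  fixes \<phi> assumes \<phi>: "\<phi> \<in> Kset le"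
begin

lemma character_add: "cone_bounded Pos x \<Longrightarrow> cone_bounded Pos y \<Longrightarrow> \<phi> (x + y, 1) = \<phi> (x, 1) + \<phi> (y, 1)"
  using KsetD(3)[OF \<phi>, of "(x, 1)" "(y, 1)"] Loc_bd_one_iff by (simp add: loc_add_def)

lemma character_mult: "cone_bounded Pos x \<Longrightarrow> cone_bounded Pos y \<Longrightarrow> \<phi> (x * y, 1) = \<phi> (x, 1) * \<phi> (y, 1)"
  using KsetD(4)[OF \<phi>, of "(x, 1)" "(y, 1)"] Loc_bd_one_iff by (simp add: loc_mult_def)

lemma character_nonneg: "cone_bounded Pos x \<Longrightarrow> x \<in> Pos \<Longrightarrow> \<phi> (x, 1) \<ge> 0"
  using KsetD(6)[OF \<phi>, of "(x, 1)"] Loc_bd_one_iff by (simp add: loc_le_def)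

lemma character_0: "\<phi> (0, 1) = 0"
  using character_add[OF cone_bounded_of_nat[of 0] cone_bounded_of_nat[of 0]] by simp

lemma character_uminus: "cone_bounded Pos x \<Longrightarrow> \<phi> (- x, 1) = - \<phi> (x, 1)"
  using character_add[OF cone_bounded_uminus, of x x] character_0 by simp

lemma character_diff: "cone_bounded Pos x \<Longrightarrow> cone_bounded Pos y \<Longrightarrow> \<phi> (x - y, 1) = \<phi> (x, 1) - \<phi> (y, 1)"
  using character_add[OF _ cone_bounded_uminus, of x y] character_uminus[of y] by simp

lemma character_of_nat: "\<phi> (of_nat n, 1) = real n"
proof (induction n)
  case 0
  then show ?case using character_0 by simp
next
  case (Suc n)
  have "\<phi> (of_nat (Suc n), 1) = \<phi> (1 + of_nat n, 1)" by simp
  also have "\<dots> = \<phi> (1, 1) + \<phi> (of_nat n, 1)"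
    using character_add[OF cone_bounded_of_nat[of 1] cone_bounded_of_nat] by simp
  finally show ?case using Suc KsetD(5)[OF \<phi>] by simp
qed

lemma character_of_int: "\<phi> (of_int p, 1) = real_of_int p"
proof (cases p rule: int_cases)
  case (nonneg n)
  then show ?thesis using character_of_nat[of n] by simp
next
  case (neg n)
  then have "(of_int p :: 'a) = - of_nat (Suc n)" "real_of_int p = - real (Suc n)" by simp_all
  then show ?thesis
    using character_uminus[OF cone_bounded_of_nat, of "Suc n"] character_of_nat[of "Suc n"] by (simp only:)
qed

lemma character_rat_to_field: "\<phi> (rat_to_field q, 1) = real_of_rat q"
proof -
  obtain p d where pd: "d > 0" "q = of_int p / of_int d" by (rule rat_fraction)
  have "rat_to_field q * of_int d = (of_int p :: 'a)"
    using rat_to_field_frac[OF _ pd(2)] of_int_neq_0[of d] pd(1) by simp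
  then have "\<phi> (rat_to_field q, 1) * real_of_int d = real_of_int p"
    using character_mult[OF cone_bounded_rat_to_field, of "of_int d" q] cone_bounded_rat_to_field[of "of_int d"]
      character_of_int by (simp add: rat_to_field_of_int)
  moreover have "real_of_rat q = real_of_int p / real_of_int d" using pd(2) by (simp add: of_rat_divide)
  ultimately have "real_of_int d * \<phi> (rat_to_field q, 1) = real_of_int d * real_of_rat q"
    using pd(1) by (simp add: field_simps)
  with pd(1) show ?thesis by simp
qed

lemma character_sum:
  "finite J \<Longrightarrow> (\<And>j. j \<in> J \<Longrightarrow> cone_bounded Pos (f j)) \<Longrightarrow> \<phi> (sum f J, 1) = (\<Sum>j\<in>J. \<phi> (f j, 1))"
  by (induction J rule: finite_induct) (simp_all add: character_0 character_add cone_bounded_sum)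

end

subsection \<open>Positivity is detected by characters\<close>

lemma std_part_character:
  assumes "total_field_cone M" "Pos \<subseteq> M"
  shows "(\<lambda>a. if a \<in> Loc_bd le then std_part M (fst a / snd a) else undefined) \<in> Kset le"
    (is "?\<phi> \<in> _")
proof -
  interpret M: total_field_cone M by (fact assms(1))
  have bounded: "cone_bounded M (fst a / snd a)" if "a \<in> Loc_bd le" for a
    using cone_bounded_mono[OF assms(2) Loc_bd_cone_bounded[OF that]] .
  show ?thesis
    unfolding Kset_def
  proof (intro CollectI conjI ballI impI)
    show "?\<phi> \<in> Loc_bd le \<rightarrow>\<^sub>E UNIV" by auto
  next
    fix a b assume ab: "a \<in> Loc_bd le" "b \<in> Loc_bd le"
    show "?\<phi> a = ?\<phi> b" if "loc_eq a b"
    proof -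
      have "fst a / snd a = fst b / snd b"
        using that Loc_nonzero[OF Loc_bdD[OF ab(1)]] Loc_nonzero[OF Loc_bdD[OF ab(2)]]
        unfolding loc_eq_def by (simp add: frac_eq_eq)
      with ab show ?thesis by simp
    qed
    show "?\<phi> (loc_add a b) = ?\<phi> a + ?\<phi> b"
      using ab loc_add_in_Loc_bd[OF ab] M.std_part_add[OF bounded bounded] by simp
    show "?\<phi> (loc_mult a b) = ?\<phi> a * ?\<phi> b"
      using ab loc_mult_in_Loc_bd[OF ab] M.std_part_mult[OF bounded bounded] by simp
  next
    show "?\<phi> (1, 1) = 1" using Loc_bd_one_iff cone_bounded_of_nat[of 1] M.std_part_of_nat[of 1] by simp
  next
    fix a assume a: "a \<in> Loc_bd le" "loc_le le (0, 1) a"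
    then have "fst a * inverse (snd a) \<in> Pos"
      using cone_mult inverse_Loc_in_Pos[OF Loc_bdD] unfolding loc_le_def by simp
    then have "fst a / snd a \<in> M" using assms(2) by (auto simp: divide_inverse)
    then show "?\<phi> a \<ge> 0" using a(1) M.std_part_nonneg[OF bounded] by simp
  qed
qed

text \<open>If \<open>x \<notle> 0\<close>, the archimedean property gives \<open>k x + 1 \<notle> 0\<close>; a total cone containing
  \<open>Pos\<close> and \<open>-(k x + 1)\<close> then yields a character with value at most \<open>-1/k\<close> on \<open>x\<close>.\<close>
lemma nonneg_if_characters_nonneg:
  assumes "cone_bounded Pos x" and nonneg: "\<And>\<phi>. \<phi> \<in> Kset le \<Longrightarrow> 0 \<le> \<phi> (x, 1)"
  shows "x \<in> Pos"
proof (rule ccontr)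
  assume "x \<notin> Pos"
  then obtain k :: nat where k: "k \<ge> 1" "of_nat k * x + 1 \<notin> Pos"
    using archimedean_Pos[of x 1] by blast
  define c where "c = of_nat k * x + 1"
  interpret C: field_cone "cone_adjoin Pos (-c)"
    using positive_cone_adjoin[OF cone_adjoin_minus_proper] k(2) unfolding c_def by unfold_locales
  obtain M where M: "positive_cone M" "cone_adjoin Pos (-c) \<subseteq> M" "\<And>y. y \<in> M \<or> - y \<in> M"
    using positive_cone_extend_total[OF C.positive_cone] by blast
  interpret M: total_field_cone M using M by unfold_locales auto
  have "Pos \<subseteq> M" "-c \<in> M" using M(2) subset_cone_adjoin in_cone_adjoin by blast+
  have "rat_to_field (1 / of_nat k) * (of_nat k :: 'a) = 1"
    using k(1) by (simp flip: rat_to_field_mult rat_to_field_of_nat add: rat_to_field_1)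
  then have "rat_to_field (1 / of_nat k) * (- c) = rat_to_field (- (1 / of_nat k)) - x"
    unfolding c_def by (simp add: algebra_simps rat_to_field_minus)
  moreover have "rat_to_field (1 / of_nat k) * (- c) \<in> M"
    using M.cone_mult[OF M.rat_to_field_nonneg \<open>-c \<in> M\<close>] by simp
  moreover note cone_bounded_mono[OF \<open>Pos \<subseteq> M\<close> assms(1)]
  ultimately have "std_part M x \<le> real_of_rat (- (1 / of_nat k))"
    using M.std_part_le by simp
  moreover have "real_of_rat (- (1 / of_nat k)) < 0" using k(1) by (simp add: of_rat_minus of_rat_divide)
  ultimately have "std_part M x < 0" by linarith
  then show False
    using nonneg[OF std_part_character[OF M.total_field_cone_axioms \<open>Pos \<subseteq> M\<close>]] Loc_bd_one_iff assms(1)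
    by simp
qed

subsection \<open>The topology of the character space\<close>

lemma topspace_Ktop: "topspace (Ktop le) = Kset le"
proof -
  have "Kset le \<subseteq> Loc_bd le \<rightarrow>\<^sub>E UNIV" unfolding Kset_def by blast
  then show ?thesis unfolding Ktop_def by auto
qed

lemma continuous_map_Ktop_eval: "j \<in> Loc_bd le \<Longrightarrow> continuous_map (Ktop le) euclideanreal (\<lambda>\<phi>. \<phi> j)"
  unfolding Ktop_def by (rule continuous_map_from_subtopology) (rule continuous_map_product_projection)

lemma O_fin_iff: "s \<in> Loc le \<Longrightarrow> \<phi> \<in> O_fin le s \<longleftrightarrow> \<phi> \<in> Kset le \<and> \<phi> (inverse s, 1) > 0"
  using character_one_Loc[of \<phi> s] unfolding O_fin_def by auto

lemma openin_O_fin: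
  assumes "s \<in> Loc le"
  shows "openin (Ktop le) (O_fin le s)"
proof -
  have "openin (Ktop le) {\<phi> \<in> topspace (Ktop le). \<phi> (1, s) \<in> {0<..}}"
    by (rule openin_continuous_map_preimage[OF continuous_map_Ktop_eval[OF one_Loc_in_Loc_bd[OF assms]]]) simp
  moreover have "{\<phi> \<in> topspace (Ktop le). \<phi> (1, s) \<in> {0<..}} = O_fin le s"
    unfolding O_fin_def topspace_Ktop by auto
  ultimately show ?thesis by simp
qed

lemma Ktop_nhood:
  assumes "openin (Ktop le) G" "\<phi>0 \<in> G"
  obtains J \<epsilon> where "finite J" "J \<subseteq> Loc_bd le" "\<epsilon> > 0"
    "\<And>\<phi>. \<phi> \<in> Kset le \<Longrightarrow> (\<And>i. i \<in> J \<Longrightarrow> \<bar>\<phi> i - \<phi>0 i\<bar> < \<epsilon>) \<Longrightarrow> \<phi> \<in> G"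
proof -
  obtain T where T: "openin (product_topology (\<lambda>_. euclideanreal) (Loc_bd le)) T" "G = T \<inter> Kset le"
    using assms(1) unfolding Ktop_def openin_subtopology by blast
  obtain U where U: "finite {i \<in> Loc_bd le. U i \<noteq> UNIV}" "\<forall>i\<in>Loc_bd le. open (U i)"
      "\<phi>0 \<in> Pi\<^sub>E (Loc_bd le) U" "Pi\<^sub>E (Loc_bd le) U \<subseteq> T"
    using T assms(2) unfolding openin_product_topology_alt by auto
  define J where "J = {i \<in> Loc_bd le. U i \<noteq> UNIV}"
  have "\<exists>e>0. ball (\<phi>0 i) e \<subseteq> U i" if "i \<in> J" for i
    using U(2,3) that open_contains_ball unfolding J_def by (auto simp: PiE_iff)
  then obtain e where e: "\<And>i. i \<in> J \<Longrightarrow> e i > 0 \<and> ball (\<phi>0 i) (e i) \<subseteq> U i" by metis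
  define \<epsilon> where "\<epsilon> = Min (insert 1 (e ` J))"
  have "finite J" using U(1) unfolding J_def .
  then have "\<epsilon> > 0" and \<epsilon>_le: "\<And>i. i \<in> J \<Longrightarrow> \<epsilon> \<le> e i"
    unfolding \<epsilon>_def using e by auto
  have "\<phi> \<in> G" if "\<phi> \<in> Kset le" and close: "\<And>i. i \<in> J \<Longrightarrow> \<bar>\<phi> i - \<phi>0 i\<bar> < \<epsilon>" for \<phi>
  proof -
    have "\<phi> i \<in> U i" if "i \<in> J" for i
      using close[OF that] \<epsilon>_le[OF that] e[OF that] by (force simp: dist_real_def abs_minus_commute)
    then have "\<phi> \<in> Pi\<^sub>E (Loc_bd le) U"
      using KsetD(1)[OF \<open>\<phi> \<in> Kset le\<close>] unfolding J_def by (auto simp: PiE_iff extensional_def)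
    with U(4) T(2) \<open>\<phi> \<in> Kset le\<close> show ?thesis by blast
  qed
  with \<open>finite J\<close> \<open>\<epsilon> > 0\<close> show ?thesis using that[of J \<epsilon>] unfolding J_def by blast
qed

lemma cone_bounded_sum_squares:
  assumes "finite J" "J \<subseteq> Loc_bd le"
  shows "cone_bounded Pos (\<Sum>i\<in>J. (fst i / snd i - rat_to_field (c i))\<^sup>2)"
  using assms Loc_bd_cone_bounded
  by (auto intro!: cone_bounded_sum cone_bounded_mult cone_bounded_diff cone_bounded_rat_to_field
      simp: power2_eq_square)

lemma character_sum_squares:
  assumes "\<phi> \<in> Kset le" "finite J" "J \<subseteq> Loc_bd le"
  shows "\<phi> (\<Sum>i\<in>J. (fst i / snd i - rat_to_field (c i))\<^sup>2, 1) = (\<Sum>i\<in>J. (\<phi> i - real_of_rat (c i))\<^sup>2)"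
proof -
  have bounded: "cone_bounded Pos (fst i / snd i - rat_to_field (c i))" if "i \<in> J" for i
    using that assms(3) Loc_bd_cone_bounded cone_bounded_diff cone_bounded_rat_to_field by blast
  have "\<phi> ((fst i / snd i - rat_to_field (c i))\<^sup>2, 1) = (\<phi> i - real_of_rat (c i))\<^sup>2" if "i \<in> J" for i
  proof -
    have "i \<in> Loc_bd le" using that assms(3) by blast
    then have "\<phi> (fst i / snd i - rat_to_field (c i), 1) = \<phi> i - real_of_rat (c i)"
      using character_diff[OF assms(1) Loc_bd_cone_bounded cone_bounded_rat_to_field]
        character_fraction[OF assms(1)] character_rat_to_field[OF assms(1)] by simp
    then show ?thesis
      using character_mult[OF assms(1) bounded[OF that] bounded[OF that]] by (simp add: power2_eq_square)
  qed
  then show ?thesis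
    using character_sum[OF assms(1,2)] bounded cone_bounded_mult by (simp add: power2_eq_square)
qed

text \<open>A basic neighbourhood of \<open>\<phi>0\<close> contains a sublevel set \<open>\<phi>(g) < \<delta>\<close> of a sum of squares
  \<open>g = \<Sum> (a\<^sub>i - c\<^sub>i)\<^sup>2\<close> with rational centres \<open>c\<^sub>i\<close> close to \<open>\<phi>0(a\<^sub>i)\<close>.\<close>
lemma character_nhood_sum_of_squares:
  assumes "\<phi>0 \<in> Kset le" "finite J" "J \<subseteq> Loc_bd le" "\<epsilon> > 0"
  obtains g \<delta> where "cone_bounded Pos g" "\<phi>0 (g, 1) < real_of_rat \<delta>"
    "\<And>\<phi> i. \<phi> \<in> Kset le \<Longrightarrow> \<phi> (g, 1) < real_of_rat \<delta> \<Longrightarrow> i \<in> J \<Longrightarrow> \<bar>\<phi> i - \<phi>0 i\<bar> < \<epsilon>"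
proof -
  obtain \<delta> where \<delta>: "0 < real_of_rat \<delta>" "real_of_rat \<delta> < (\<epsilon> / 2)\<^sup>2"
    using of_rat_dense[of 0 "(\<epsilon> / 2)\<^sup>2"] assms(4) by auto
  define \<eta> where "\<eta> = sqrt (real_of_rat \<delta> / (card J + 1))"
  have "\<eta> > 0" unfolding \<eta>_def using \<delta>(1) by simp
  have "\<exists>q. \<bar>\<phi>0 i - real_of_rat q\<bar> < \<eta>" for i
    using of_rat_dense[of "\<phi>0 i - \<eta>" "\<phi>0 i + \<eta>"] \<open>\<eta> > 0\<close>
    by (auto simp: abs_less_iff) (metis add.commute diff_less_eq less_diff_eq)
  then obtain c where c: "\<And>i. \<bar>\<phi>0 i - real_of_rat (c i)\<bar> < \<eta>" by metis
  define g where "g = (\<Sum>i\<in>J. (fst i / snd i - rat_to_field (c i))\<^sup>2)"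
  note g_value = character_sum_squares[OF _ assms(2,3), of _ c, folded g_def]
  have "\<eta>\<^sup>2 = real_of_rat \<delta> / (card J + 1)" unfolding \<eta>_def using \<delta>(1) by simp
  also have "\<dots> \<le> real_of_rat \<delta>" using \<delta>(1) by (simp add: field_simps)
  finally have \<eta>_small: "\<eta> < \<epsilon> / 2"
    using \<delta>(2) power2_less_imp_less[of \<eta> "\<epsilon> / 2"] assms(4) by linarith
  have "(\<Sum>i\<in>J. (\<phi>0 i - real_of_rat (c i))\<^sup>2) \<le> (\<Sum>i\<in>J. real_of_rat \<delta> / (card J + 1))"
  proof (rule sum_mono)
    fix i
    have "\<bar>\<phi>0 i - real_of_rat (c i)\<bar> < sqrt (real_of_rat \<delta> / (card J + 1))" using c \<eta>_def by simp
    then show "(\<phi>0 i - real_of_rat (c i))\<^sup>2 \<le> real_of_rat \<delta> / (card J + 1)"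
      by (metis less_imp_le real_sqrt_abs real_sqrt_less_iff)
  qed
  also have "\<dots> < real_of_rat \<delta>" using \<delta>(1) by (simp add: field_simps)
  finally have "\<phi>0 (g, 1) < real_of_rat \<delta>" using g_value[OF assms(1)] by simp
  moreover have "\<bar>\<phi> i - \<phi>0 i\<bar> < \<epsilon>"
    if "\<phi> \<in> Kset le" "\<phi> (g, 1) < real_of_rat \<delta>" "i \<in> J" for \<phi> i
  proof -
    have "(\<phi> i - real_of_rat (c i))\<^sup>2 \<le> \<phi> (g, 1)"
      unfolding g_value[OF that(1)] by (rule member_le_sum[OF that(3) _ assms(2)]) simp
    then have "(\<phi> i - real_of_rat (c i))\<^sup>2 < (\<epsilon> / 2)\<^sup>2" using that(2) \<delta>(2) by linarith
    then have "\<bar>\<phi> i - real_of_rat (c i)\<bar> < \<epsilon> / 2"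
      using abs_le_square_iff[of "\<epsilon> / 2" "\<phi> i - real_of_rat (c i)"] assms(4) by auto
    with c[of i] \<eta>_small show ?thesis by linarith
  qed
  ultimately show ?thesis using that cone_bounded_sum_squares[OF assms(2,3)] unfolding g_def by blast
qed

text \<open>If \<open>O\<^sub>s\<close> missed a neighbourhood of \<open>\<phi>0\<close>, then \<open>(g - \<delta>)/s\<close> would be nonnegative under every
  character: either \<open>\<phi>(g) \<ge> \<delta>\<close>, or \<open>\<phi>\<close> lies in the neighbourhood and hence \<open>\<phi>(1/s) = 0\<close>.
  So \<open>g \<ge> \<delta>\<close>, contradicting \<open>\<phi>0(g) < \<delta>\<close>.\<close>
lemma dense_open_O_fin:
  assumes s: "s \<in> Loc le"
  shows "dense_open (Ktop le) (O_fin le s)"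
  unfolding dense_open_def dense_intersects_open
proof (intro conjI allI impI openin_O_fin[OF s])
  fix G assume "openin (Ktop le) G \<and> G \<noteq> {}"
  then obtain \<phi>0 where G: "openin (Ktop le) G" "\<phi>0 \<in> G" by blast
  then have "\<phi>0 \<in> Kset le" using openin_subset topspace_Ktop by blast
  show "O_fin le s \<inter> G \<noteq> {}"
  proof
    assume disjoint: "O_fin le s \<inter> G = {}"
    obtain J \<epsilon> where J: "finite J" "J \<subseteq> Loc_bd le" "\<epsilon> > 0"
      and in_G: "\<And>\<phi>. \<phi> \<in> Kset le \<Longrightarrow> (\<And>i. i \<in> J \<Longrightarrow> \<bar>\<phi> i - \<phi>0 i\<bar> < \<epsilon>) \<Longrightarrow> \<phi> \<in> G"
      using Ktop_nhood[OF G] by blast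
    obtain g \<delta> where g: "cone_bounded Pos g" "\<phi>0 (g, 1) < real_of_rat \<delta>"
      and close: "\<And>\<phi> i. \<phi> \<in> Kset le \<Longrightarrow> \<phi> (g, 1) < real_of_rat \<delta> \<Longrightarrow> i \<in> J \<Longrightarrow> \<bar>\<phi> i - \<phi>0 i\<bar> < \<epsilon>"
      using character_nhood_sum_of_squares[OF \<open>\<phi>0 \<in> Kset le\<close> J] by blast
    have bounded: "cone_bounded Pos (g - rat_to_field \<delta>)" "cone_bounded Pos (inverse s)"
      using g(1) cone_bounded_diff cone_bounded_rat_to_field cone_bounded_inverse_Loc[OF s] by auto
    have "0 \<le> \<phi> (inverse s * (g - rat_to_field \<delta>), 1)" if "\<phi> \<in> Kset le" for \<phi>
    proof -
      have "\<phi> (inverse s * (g - rat_to_field \<delta>), 1) = \<phi> (inverse s, 1) * (\<phi> (g, 1) - real_of_rat \<delta>)"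
        using character_mult[OF that bounded(2,1)] character_diff[OF that g(1) cone_bounded_rat_to_field]
          character_rat_to_field[OF that] by simp
      moreover have "\<phi> (inverse s, 1) \<ge> 0"
        using character_nonneg[OF that bounded(2) inverse_Loc_in_Pos[OF s]] .
      moreover have "\<phi> (inverse s, 1) = 0" if "\<phi> (g, 1) < real_of_rat \<delta>"
        using in_G[OF \<open>\<phi> \<in> Kset le\<close> close[OF \<open>\<phi> \<in> Kset le\<close> that]] disjoint O_fin_iff[OF s]
          \<open>\<phi> (inverse s, 1) \<ge> 0\<close> \<open>\<phi> \<in> Kset le\<close> by force
      ultimately show ?thesis by (cases "\<phi> (g, 1) < real_of_rat \<delta>") auto
    qed
    then have "inverse s * (g - rat_to_field \<delta>) \<in> Pos"
      using nonneg_if_characters_nonneg cone_bounded_mult[OF bounded(2,1)] by blast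
    then have "s * (inverse s * (g - rat_to_field \<delta>)) \<in> Pos" using cone_mult Loc_in_Pos[OF s] by blast
    then have "g - rat_to_field \<delta> \<in> Pos" using Loc_nonzero[OF s] by (simp add: mult.assoc[symmetric])
    then show False
      using character_nonneg[OF \<open>\<phi>0 \<in> Kset le\<close> bounded(1)] g
        character_diff[OF \<open>\<phi>0 \<in> Kset le\<close> g(1) cone_bounded_rat_to_field]
        character_rat_to_field[OF \<open>\<phi>0 \<in> Kset le\<close>] by simp
  qed
qed

subsection \<open>The extended Gelfand transformation\<close>

definition gelfand_denom :: "'a \<Rightarrow> 'a" where
  "gelfand_denom r = (SOME s. s \<in> Loc le \<and> (r, s) \<in> Loc_bd le)"

lemma gelfand_eq_rep: "gelfand le r = gelfand_rep le (gelfand_denom r) r"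
  unfolding gelfand_def gelfand_denom_def ..

lemma gelfand_denom: "gelfand_denom r \<in> Loc le" "cone_bounded Pos (r / gelfand_denom r)"
proof -
  obtain s where s: "s \<in> Loc le" "le (- s) r" "le r s"
    using localizable unfolding localizable_def by blast
  then have "(r, s) \<in> Loc_bd le" unfolding Loc_bd_def loc_le_def by (auto intro!: exI[of _ 1])
  with s(1) have "gelfand_denom r \<in> Loc le \<and> (r, gelfand_denom r) \<in> Loc_bd le"
    unfolding gelfand_denom_def by (rule someI[of "\<lambda>s. s \<in> Loc le \<and> (r, s) \<in> Loc_bd le", OF conjI])
  then show "gelfand_denom r \<in> Loc le" "cone_bounded Pos (r / gelfand_denom r)"
    using Loc_bd_iff by auto
qed

definition gelfand_value :: "('a \<times> 'a \<Rightarrow> real) \<Rightarrow> 'a \<Rightarrow> 'a \<Rightarrow> real" where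
  "gelfand_value \<phi> r s = \<phi> (r / s, 1) / \<phi> (inverse s, 1)"

lemma gelfand_rep_value:
  assumes "\<phi> \<in> Kset le" "s \<in> Loc le" "cone_bounded Pos (r / s)"
  shows "snd (gelfand_rep le s r) \<phi> = gelfand_value \<phi> r s"
proof -
  have "\<phi> (r, s) = \<phi> (r / s, 1)" using character_fraction[OF assms(1), of "(r, s)"] Loc_bd_iff assms by simp
  then show ?thesis
    unfolding gelfand_rep_def gelfand_value_def using character_one_Loc[OF assms(1,2)]
    by (simp add: divide_inverse mult.commute)
qed

lemma gelfand_value_indep:
  assumes "\<phi> \<in> O_fin le s" "\<phi> \<in> O_fin le s'" "s \<in> Loc le" "s' \<in> Loc le"
    and "cone_bounded Pos (r / s)" "cone_bounded Pos (r / s')"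
  shows "gelfand_value \<phi> r s = gelfand_value \<phi> r s'"
proof -
  have \<phi>: "\<phi> \<in> Kset le" "\<phi> (inverse s, 1) > 0" "\<phi> (inverse s', 1) > 0"
    using assms O_fin_iff by auto
  have "r / s * inverse s' = r / s' * inverse s" by (simp add: field_simps)
  then have "\<phi> (r / s, 1) * \<phi> (inverse s', 1) = \<phi> (r / s', 1) * \<phi> (inverse s, 1)"
    using character_mult[OF \<phi>(1)] assms(5,6) cone_bounded_inverse_Loc assms(3,4) by metis
  then show ?thesis unfolding gelfand_value_def using \<phi> by (simp add: field_simps)
qed

lemma O_fin_mult:
  assumes "s \<in> Loc le" "t \<in> Loc le" "\<phi> \<in> O_fin le s" "\<phi> \<in> O_fin le t"
  shows "\<phi> \<in> O_fin le (s * t)"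
proof -
  have \<phi>: "\<phi> \<in> Kset le" "\<phi> (inverse s, 1) > 0" "\<phi> (inverse t, 1) > 0"
    using assms O_fin_iff by auto
  then have "\<phi> (inverse (s * t), 1) > 0"
    using character_mult[OF \<phi>(1) cone_bounded_inverse_Loc cone_bounded_inverse_Loc] assms(1,2) by simp
  then show ?thesis using O_fin_iff Loc_mult assms(1,2) \<phi>(1) by blast
qed

lemma cone_bounded_divide_mult_Loc:
  assumes "s' \<in> Loc le" "cone_bounded Pos (r / s)"
  shows "cone_bounded Pos (r / (s * s'))"
proof -
  have "r / (s * s') = r / s * inverse s'" by (simp add: divide_inverse mult.assoc)
  then show ?thesis using cone_bounded_mult[OF assms(2) cone_bounded_inverse_Loc[OF assms(1)]] by simp
qed

lemma gelfand_in_cae: "gelfand le r \<in> cae (Ktop le)"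
proof -
  have "continuous_map (subtopology (Ktop le) (O_fin le (gelfand_denom r))) euclideanreal
          (\<lambda>\<phi>. inverse (\<phi> (1, gelfand_denom r)) * \<phi> (r, gelfand_denom r))"
  proof (intro continuous_map_real_mult continuous_map_real_inverse continuous_map_from_subtopology
      continuous_map_Ktop_eval)
    show "(1, gelfand_denom r) \<in> Loc_bd le" by (rule one_Loc_in_Loc_bd[OF gelfand_denom(1)])
    show "(r, gelfand_denom r) \<in> Loc_bd le" using Loc_bd_iff gelfand_denom by blast
    fix \<phi> assume "\<phi> \<in> topspace (subtopology (Ktop le) (O_fin le (gelfand_denom r)))"
    then show "\<phi> (1, gelfand_denom r) \<noteq> 0" unfolding O_fin_def by auto
  qed
  then show ?thesis
    unfolding cae_def gelfand_eq_rep gelfand_rep_def using dense_open_O_fin[OF gelfand_denom(1)] by simp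
qed

text \<open>Additivity and multiplicativity are checked on \<open>O\<^sub>s\<^sub>1 \<inter> O\<^sub>s\<^sub>2 \<inter> O\<^sub>s\<^sub>3\<close> by passing to the
  common denominator \<open>s\<^sub>1 s\<^sub>2 s\<^sub>3\<close>.\<close>
lemma gelfand_add: "cae_eq (Ktop le) (gelfand le (r + t)) (cae_add (gelfand le r) (gelfand le t))"
proof -
  define s1 s2 s3 where "s1 = gelfand_denom r" and "s2 = gelfand_denom t" and "s3 = gelfand_denom (r + t)"
  note s = gelfand_denom[of r, folded s1_def] gelfand_denom[of t, folded s2_def]
    gelfand_denom[of "r + t", folded s3_def]
  define S where "S = s1 * s2 * s3"
  have "S \<in> Loc le" unfolding S_def using s Loc_mult by blast
  have bounded: "cone_bounded Pos (r / S)" "cone_bounded Pos (t / S)" "cone_bounded Pos ((r + t) / S)"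
    using cone_bounded_divide_mult_Loc[OF Loc_mult[OF s(3,5)] s(2)]
      cone_bounded_divide_mult_Loc[OF Loc_mult[OF s(1,5)] s(4)]
      cone_bounded_divide_mult_Loc[OF Loc_mult[OF s(1,3)] s(6)]
    unfolding S_def by (simp_all add: ac_simps)
  define W where "W = O_fin le s1 \<inter> O_fin le s2 \<inter> O_fin le s3"
  have "gelfand_value \<phi> (r + t) s3 = gelfand_value \<phi> r s1 + gelfand_value \<phi> t s2" if "\<phi> \<in> W" for \<phi>
  proof -
    have \<phi>: "\<phi> \<in> O_fin le s1" "\<phi> \<in> O_fin le s2" "\<phi> \<in> O_fin le s3" "\<phi> \<in> O_fin le S"
      using that O_fin_mult s Loc_mult unfolding W_def S_def by auto
    then have "\<phi> \<in> Kset le" unfolding O_fin_def by blast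
    have "gelfand_value \<phi> (r + t) S = gelfand_value \<phi> r S + gelfand_value \<phi> t S"
      unfolding gelfand_value_def add_divide_distrib character_add[OF \<open>\<phi> \<in> Kset le\<close> bounded(1,2)] ..
    then show ?thesis
      using gelfand_value_indep[OF \<phi>(1,4) s(1) \<open>S \<in> Loc le\<close> s(2) bounded(1)]
        gelfand_value_indep[OF \<phi>(2,4) s(3) \<open>S \<in> Loc le\<close> s(4) bounded(2)]
        gelfand_value_indep[OF \<phi>(3,4) s(5) \<open>S \<in> Loc le\<close> s(6) bounded(3)] by simp
  qed
  moreover have "dense_open (Ktop le) W" unfolding W_def using dense_open_O_fin s dense_open_Int by metis
  moreover have "W \<subseteq> Kset le" unfolding W_def O_fin_def by blast
  ultimately show ?thesis
    unfolding cae_eq_def cae_add_def gelfand_eq_rep s1_def[symmetric] s2_def[symmetric] s3_def[symmetric]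
    using gelfand_rep_value s by (intro exI[of _ W]) (auto simp: W_def gelfand_rep_def)
qed

lemma gelfand_mult: "cae_eq (Ktop le) (gelfand le (r * t)) (cae_mult (gelfand le r) (gelfand le t))"
proof -
  define s1 s2 s3 where "s1 = gelfand_denom r" and "s2 = gelfand_denom t" and "s3 = gelfand_denom (r * t)"
  note s = gelfand_denom[of r, folded s1_def] gelfand_denom[of t, folded s2_def]
    gelfand_denom[of "r * t", folded s3_def]
  define S where "S = s1 * s2 * s3"
  have "S \<in> Loc le" "S * S \<in> Loc le" unfolding S_def using s Loc_mult by blast+
  have bounded: "cone_bounded Pos (r / S)" "cone_bounded Pos (t / S)"
    using cone_bounded_divide_mult_Loc[OF Loc_mult[OF s(3,5)] s(2)]
      cone_bounded_divide_mult_Loc[OF Loc_mult[OF s(1,5)] s(4)]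
    unfolding S_def by (simp_all add: ac_simps)
  have "r * t / (S * S) = (r / S) * (t / S)" by simp
  then have bounded_mult: "cone_bounded Pos (r * t / (S * S))" using cone_bounded_mult[OF bounded] by simp
  define W where "W = O_fin le s1 \<inter> O_fin le s2 \<inter> O_fin le s3"
  have "gelfand_value \<phi> (r * t) s3 = gelfand_value \<phi> r s1 * gelfand_value \<phi> t s2" if "\<phi> \<in> W" for \<phi>
  proof -
    have \<phi>: "\<phi> \<in> O_fin le s1" "\<phi> \<in> O_fin le s2" "\<phi> \<in> O_fin le s3" "\<phi> \<in> O_fin le S" "\<phi> \<in> O_fin le (S * S)"
      using that O_fin_mult s Loc_mult \<open>S \<in> Loc le\<close> unfolding W_def S_def by auto
    then have "\<phi> \<in> Kset le" unfolding O_fin_def by blast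
    have "\<phi> (inverse (S * S), 1) = \<phi> (inverse S, 1) * \<phi> (inverse S, 1)"
      using character_mult[OF \<open>\<phi> \<in> Kset le\<close> cone_bounded_inverse_Loc cone_bounded_inverse_Loc]
        \<open>S \<in> Loc le\<close> by simp
    then have "gelfand_value \<phi> (r * t) (S * S) = gelfand_value \<phi> r S * gelfand_value \<phi> t S"
      unfolding gelfand_value_def \<open>r * t / (S * S) = (r / S) * (t / S)\<close>
        character_mult[OF \<open>\<phi> \<in> Kset le\<close> bounded] by simp
    then show ?thesis
      using gelfand_value_indep[OF \<phi>(1,4) s(1) \<open>S \<in> Loc le\<close> s(2) bounded(1)]
        gelfand_value_indep[OF \<phi>(2,4) s(3) \<open>S \<in> Loc le\<close> s(4) bounded(2)]
        gelfand_value_indep[OF \<phi>(3,5) s(5) \<open>S * S \<in> Loc le\<close> s(6) bounded_mult] by simp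
  qed
  moreover have "dense_open (Ktop le) W" unfolding W_def using dense_open_O_fin s dense_open_Int by metis
  moreover have "W \<subseteq> Kset le" unfolding W_def O_fin_def by blast
  ultimately show ?thesis
    unfolding cae_eq_def cae_mult_def gelfand_eq_rep s1_def[symmetric] s2_def[symmetric] s3_def[symmetric]
    using gelfand_rep_value s by (intro exI[of _ W]) (auto simp: W_def gelfand_rep_def)
qed

lemma gelfand_one: "cae_eq (Ktop le) (gelfand le 1) (cae_const (Ktop le) 1)"
  unfolding cae_eq_def cae_const_def gelfand_eq_rep gelfand_rep_def topspace_Ktop
  using dense_open_O_fin[OF gelfand_denom(1)] by (intro exI[of _ "O_fin le (gelfand_denom 1)"]) (auto simp: O_fin_def)

lemma gelfand_nonneg:
  assumes "le 0 r"
  shows "cae_le (Ktop le) (cae_const (Ktop le) 0) (gelfand le r)"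
proof -
  have "0 \<le> \<phi> (r, gelfand_denom r)" if "\<phi> \<in> Kset le" for \<phi>
    using KsetD(6)[OF that] gelfand_denom Loc_bd_iff assms by (simp add: loc_le_def)
  then show ?thesis
    unfolding cae_le_def cae_const_def gelfand_eq_rep gelfand_rep_def topspace_Ktop
    using dense_open_O_fin[OF gelfand_denom(1)] by (intro exI[of _ "O_fin le (gelfand_denom r)"]) (auto simp: O_fin_def)
qed

text \<open>Conversely, if \<open>\<phi>(r/s) < 0\<close> for some character, then \<open>\<psi>(r/s) < 0\<close> on a neighbourhood of \<open>\<phi>\<close>,
  which meets the dense set on which the transform of \<open>r\<close> is nonnegative. Hence all characters are nonnegative at
  \<open>r/s\<close>, and \<open>r/s \<ge> 0\<close> by \<open>nonneg_if_characters_nonneg\<close>.\<close>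
lemma nonneg_if_gelfand_nonneg:
  assumes "cae_le (Ktop le) (cae_const (Ktop le) 0) (gelfand le r)"
  shows "le 0 r"
proof -
  define s where "s = gelfand_denom r"
  note s = gelfand_denom[of r, folded s_def]
  have "(r, s) \<in> Loc_bd le" using s Loc_bd_iff by blast
  obtain W where W: "dense_open (Ktop le) W" "W \<subseteq> O_fin le s" "\<And>\<phi>. \<phi> \<in> W \<Longrightarrow> 0 \<le> inverse (\<phi> (1, s)) * \<phi> (r, s)"
    using assms unfolding cae_le_def cae_const_def gelfand_eq_rep gelfand_rep_def s_def by auto
  have W_nonneg: "0 \<le> \<phi> (r, s)" if "\<phi> \<in> W" for \<phi>
  proof -
    have "\<phi> (1, s) > 0" using W(2) that unfolding O_fin_def by auto
    with W(3)[OF that] show ?thesis by (simp add: zero_le_mult_iff)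
  qed
  have "0 \<le> \<phi> (r / s, 1)" if "\<phi> \<in> Kset le" for \<phi>
  proof (rule ccontr)
    assume "\<not> 0 \<le> \<phi> (r / s, 1)"
    define G where "G = {\<psi> \<in> topspace (Ktop le). \<psi> (r, s) \<in> {..<0}}"
    have "openin (Ktop le) G" unfolding G_def
      by (rule openin_continuous_map_preimage[OF continuous_map_Ktop_eval[OF \<open>(r, s) \<in> Loc_bd le\<close>]]) simp
    moreover have "\<phi> \<in> G"
      unfolding G_def topspace_Ktop using that \<open>\<not> 0 \<le> \<phi> (r / s, 1)\<close>
        character_fraction[OF that \<open>(r, s) \<in> Loc_bd le\<close>] by simp
    ultimately obtain \<psi> where "\<psi> \<in> W" "\<psi> \<in> G"
      using W(1) unfolding dense_open_def dense_intersects_open by blast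
    then show False using W_nonneg unfolding G_def by force
  qed
  then have "r / s \<in> Pos" using nonneg_if_characters_nonneg s(2) by blast
  then have "r / s * s \<in> Pos" using cone_mult Loc_in_Pos[OF s(1)] by blast
  then show ?thesis using Loc_nonzero[OF s(1)] by simp
qed

end

theorem theorem39:
  fixes le :: "'a::field \<Rightarrow> 'a \<Rightarrow> bool"
  assumes "po_field le" and "archimedean_po le"
  shows "localizable le \<and>
    (\<forall>r. gelfand le r \<in> cae (Ktop le)) \<and>
    (\<forall>r t. cae_eq (Ktop le) (gelfand le (r + t)) (cae_add (gelfand le r) (gelfand le t))) \<and>
    (\<forall>r t. cae_eq (Ktop le) (gelfand le (r * t)) (cae_mult (gelfand le r) (gelfand le t))) \<and>
    cae_eq (Ktop le) (gelfand le 1) (cae_const (Ktop le) 1) \<and>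
    (\<forall>r. le 0 r \<longrightarrow> cae_le (Ktop le) (cae_const (Ktop le) 0) (gelfand le r)) \<and>
    (\<forall>r. cae_le (Ktop le) (cae_const (Ktop le) 0) (gelfand le r) \<longrightarrow> le 0 r)"
proof -
  interpret archimedean_po_field le using assms by unfold_locales
  show ?thesis
    using localizable gelfand_in_cae gelfand_add gelfand_mult gelfand_one gelfand_nonneg
      nonneg_if_gelfand_nonneg by blast
qed

end
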